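(* Fix constants $P_1,\dots,P_N\ge0$. For each $M$ let $\mathbf{a}^{(M)}\in\mathbb{C}^N$ satisfy $|a_i^{(M)}|^2=P_i/\sqrt{M}$. Then, almost surely, $$\lim_{M\to\infty}D_{\mathbf{H}_M}(\mathbf{a}^{(M)})=\frac{\sigma_\theta^4\Big(\sum_{i=1}^N P_i/d_i^{\alpha}\Big)^2}{\sum_{i=1}^N\sigma_{v,i}^4P_i^2/d_i^{2\alpha}+\sigma_n^4},$$ which does not depend on $M$; i.e. scaling the sensor transmit powers by $1/\sqrt{M}$ keeps the deflection of the energy detector asymptotically constant.
   Context: Constants: $\sigma_\theta^2,\sigma_n^2>0$, $\sigma_{v,i}^2>0$, $d_i>0$, $\alpha>0$; $\mathbf{V}=\mathrm{diag}\{\sigma_{v,1}^2,\dots,\sigma_{v,N}^2\}$. Channel: $(\tilde h_{mi})_{m\ge1,1\le i\le N}$ i.i.d. $\mathcal{CN}(0,1)$, $\mathbf{H}_M\in\mathbb{C}^{M\times N}$ with $[\mathbf{H}_M]_{mi}=\tilde h_{mi}/\sqrt{d_i^\alpha}$. For $\mathbf{a}\in\mathbb{C}^N$, $\mathbf{D}=\mathrm{diag}\{a_i\}$; with $\theta\sim\mathcal{CN}(0,\sigma_\theta^2)$, $\mathbf{v}\sim\mathcal{CN}(\mathbf{0},\mathbf{V})$, $\mathbf{n}\sim\mathcal{CN}(\mathbf{0},\sigma_n^2\mathbf{I}_M)$ independent, $\mathcal{H}_0:\mathbf{y}=\mathbf{H}\mathbf{D}\mathbf{v}+\mathbf{n}$,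 $\mathcal{H}_1:\mathbf{y}=\mathbf{H}\mathbf{a}\theta+\mathbf{H}\mathbf{D}\mathbf{v}+\mathbf{n}$. Energy detector statistic $T=\frac1M\mathbf{y}^H\mathbf{y}$. Deflection (with $\mathbf{H}$ held fixed, expectations over $\theta,\mathbf{v},\mathbf{n}$): $D_{\mathbf{H}}(\mathbf{a})=\dfrac{(\mathbb{E}\{T|\mathcal{H}_1\}-\mathbb{E}\{T|\mathcal{H}_0\})^2}{\mathrm{Var}\{T|\mathcal{H}_0\}}$. *)

theory Defs
  imports "HOL-Probability.Probability"
begin

text \<open>Circularly-symmetric complex Gaussian CN(0,s2): real and imaginary parts
  independent N(0, s2/2) (normal_density takes the standard deviation).\<close>
definition cgauss :: "real \<Rightarrow> complex measure" where
  "cgauss s2 = distr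
     (density lborel (normal_density 0 (sqrt (s2 / 2))) \<Otimes>\<^sub>M
      density lborel (normal_density 0 (sqrt (s2 / 2))))
     borel (\<lambda>(x, y). Complex x y)"

definition sig_space ::
  "nat \<Rightarrow> nat \<Rightarrow> real \<Rightarrow> (nat \<Rightarrow> real) \<Rightarrow> real
   \<Rightarrow> (complex \<times> (nat \<Rightarrow> complex) \<times> (nat \<Rightarrow> complex)) measure" where
  "sig_space N M st2 sv2 sn2 =
     cgauss st2 \<Otimes>\<^sub>M (PiM {..<N} (\<lambda>i. cgauss (sv2 i)) \<Otimes>\<^sub>M PiM {..<M} (\<lambda>_. cgauss sn2))"

text \<open>Observation y (entries m < M) for channel matrix H (entry H m i, m < M, i < N)
  and transmit vector a; hyp = True is H1, hyp = False is H0.\<close>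
definition obs ::
  "nat \<Rightarrow> (nat \<Rightarrow> nat \<Rightarrow> complex) \<Rightarrow> (nat \<Rightarrow> complex) \<Rightarrow> bool
   \<Rightarrow> complex \<times> (nat \<Rightarrow> complex) \<times> (nat \<Rightarrow> complex) \<Rightarrow> nat \<Rightarrow> complex" where
  "obs N H a hyp w m =
     (case w of (\<theta>, v, n) \<Rightarrow>
        (if hyp then (\<Sum>i<N. H m i * a i) * \<theta> else 0)
        + (\<Sum>i<N. H m i * a i * v i) + n m)"

definition energy ::
  "nat \<Rightarrow> nat \<Rightarrow> (nat \<Rightarrow> nat \<Rightarrow> complex) \<Rightarrow> (nat \<Rightarrow> complex) \<Rightarrow> bool
   \<Rightarrow> complex \<times> (nat \<Rightarrow> complex) \<times> (nat \<Rightarrow> complex) \<Rightarrow> real" where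
  "energy N M H a hyp w = (1 / real M) * (\<Sum>m<M. (cmod (obs N H a hyp w m))\<^sup>2)"

definition deflection ::
  "nat \<Rightarrow> nat \<Rightarrow> real \<Rightarrow> (nat \<Rightarrow> real) \<Rightarrow> real
   \<Rightarrow> (nat \<Rightarrow> nat \<Rightarrow> complex) \<Rightarrow> (nat \<Rightarrow> complex) \<Rightarrow> real" where
  "deflection N M st2 sv2 sn2 H a =
     (let S = sig_space N M st2 sv2 sn2;
          E1 = integral\<^sup>L S (energy N M H a True);
          E0 = integral\<^sup>L S (energy N M H a False);
          V0 = integral\<^sup>L S (\<lambda>w. (energy N M H a False w - E0)\<^sup>2)
      in (E1 - E0)\<^sup>2 / V0)"

definition chan_space :: "(nat \<times> nat \<Rightarrow> complex) measure" where
  "chan_space = PiM UNIV (\<lambda>_. cgauss 1)"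

end

(*
  Given the channel, the observation y is a linear form in independent circular Gaussians, so
  the mean and the variance of the energy detector involve moments of order at most four.  By
  Isserlis' theorem E|y_m|^2 |y_m'|^2 = C_mm C_m'm' + |C_mm'|^2 for the covariance C of y, hence
  Var T = |C|_F^2 / M^2 with C = H D V D^H H^H + sigma_n^2 I under H_0.  This turns the deflection
  into a rational function of the normalized Gram matrix R = H~^H H~ / M of the channel, in
  which the power scaling |a_i|^2 = P_i / sqrt M leaves numerator and denominator both of order
  1/M.  The strong law of large numbers, obtained from Chebyshev's inequality along the squares,
  Borel-Cantelli and monotone interpolation, together with polarization, gives R -> I almost
  surely, and the limit follows.
*)
theory Submission
  imports Defs "HOL-Library.Discrete_Functions" "HOL-Real_Asymp.Real_Asymp"
begin

section \<open>Moments of the circular complex Gaussian\<close>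

lemma has_bochner_integral_pair_mult:
  fixes f :: "'a \<Rightarrow> complex" and g :: "'b \<Rightarrow> complex"
  assumes "sigma_finite_measure M1" "sigma_finite_measure M2"
    and f: "has_bochner_integral M1 f a" and g: "has_bochner_integral M2 g b"
  shows "has_bochner_integral (M1 \<Otimes>\<^sub>M M2) (\<lambda>z. f (fst z) * g (snd z)) (a * b)"
proof -
  interpret pair_sigma_finite M1 M2 using assms(1,2) by (simp add: pair_sigma_finite_def)
  have fi: "integrable M1 f" and gi: "integrable M2 g" using f g by (auto simp: has_bochner_integral_iff)
  have [measurable]: "f \<in> borel_measurable M1" "g \<in> borel_measurable M2" using fi gi by auto
  have int: "integrable (M1 \<Otimes>\<^sub>M M2) (\<lambda>z. f (fst z) * g (snd z))"
  proof (rule Fubini_integrable)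
    show "(\<lambda>z. f (fst z) * g (snd z)) \<in> borel_measurable (M1 \<Otimes>\<^sub>M M2)" by measurable
    have "(\<lambda>x. \<integral>y. norm (f (fst (x, y)) * g (snd (x, y))) \<partial>M2) = (\<lambda>x. norm (f x) * (\<integral>y. norm (g y) \<partial>M2))"
      by (simp add: norm_mult)
    then show "integrable M1 (\<lambda>x. \<integral>y. norm (f (fst (x, y)) * g (snd (x, y))) \<partial>M2)"
      using fi by (simp add: integrable_norm)
    show "AE x in M1. integrable M2 (\<lambda>y. f (fst (x, y)) * g (snd (x, y)))"
      using gi by simp
  qed
  have "integral\<^sup>L (M1 \<Otimes>\<^sub>M M2) (\<lambda>z. f (fst z) * g (snd z)) = (\<integral>x. (\<integral>y. f x * g y \<partial>M2) \<partial>M1)"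
    using integral_fst'[OF int] by simp
  also have "\<dots> = a * b" using f g by (simp add: has_bochner_integral_iff)
  finally show ?thesis using int by (simp add: has_bochner_integral_iff)
qed

definition normal_moment :: "real \<Rightarrow> nat \<Rightarrow> real" where
  "normal_moment \<sigma> k =
     (if odd k then 0 else fact k / ((2 / \<sigma>\<^sup>2) ^ (k div 2) * fact (k div 2)))"

lemma normal_moment_upto4:
  "normal_moment \<sigma> 0 = 1" "normal_moment \<sigma> 1 = 0" "normal_moment \<sigma> 2 = \<sigma>\<^sup>2"
  "normal_moment \<sigma> 3 = 0" "normal_moment \<sigma> 4 = 3 * \<sigma> ^ 4"
  by (simp_all add: normal_moment_def fact_numeral power2_eq_square power4_eq_xxxx)

lemma has_bochner_integral_normal_moment:
  assumes "\<sigma> > 0"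
  shows "has_bochner_integral (density lborel (normal_density 0 \<sigma>)) (\<lambda>x. x ^ k) (normal_moment \<sigma> k)"
proof -
  have "has_bochner_integral lborel (\<lambda>x. normal_density 0 \<sigma> x * x ^ k) (normal_moment \<sigma> k)"
  proof (cases "even k")
    case True
    then obtain j where "k = 2 * j" by blast
    then show ?thesis
      using normal_moment_even[OF assms, where \<mu>=0 and k=j] by (simp add: normal_moment_def)
  next
    case False
    then obtain j where "k = 2 * j + 1" using oddE by blast
    then show ?thesis
      using normal_moment_odd[OF assms, where \<mu>=0 and k=j] by (simp add: normal_moment_def)
  qed
  then show ?thesis
    by (intro has_bochner_integral_density) auto
qed

lemma measurable_Complex_pair:
  assumes "sets M1 = sets borel" "sets M2 = sets borel"
  shows "(\<lambda>(x, y). Complex x y) \<in> measurable (M1 \<Otimes>\<^sub>M M2) borel"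
  unfolding split_beta' Complex_eq using assms by measurable

lemma prob_space_cgauss: "s > 0 \<Longrightarrow> prob_space (cgauss s)"
  unfolding cgauss_def
  by (intro prob_space.prob_space_distr prob_space_pair prob_space_normal_density
      measurable_Complex_pair) auto

lemma sets_cgauss [simp, measurable_cong]: "sets (cgauss s) = sets borel"
  by (simp add: cgauss_def)

lemma Complex_power_cnj_power:
  "Complex x y ^ p * cnj (Complex x y) ^ q =
     (\<Sum>j\<le>p. \<Sum>l\<le>q. (of_nat (p choose j) * of_nat (q choose l) * \<i> ^ (p - j) * (- \<i>) ^ (q - l))
        * (of_real (x ^ (j + l)) * of_real (y ^ (p - j + (q - l)))))"
proof -
  have "Complex x y = of_real x + \<i> * of_real y" "cnj (Complex x y) = of_real x + (- \<i>) * of_real y"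
    by (simp_all add: Complex_eq complex_eq_iff)
  then have "Complex x y ^ p * cnj (Complex x y) ^ q =
      (\<Sum>j\<le>p. of_nat (p choose j) * of_real x ^ j * (\<i> * of_real y) ^ (p - j)) *
      (\<Sum>l\<le>q. of_nat (q choose l) * of_real x ^ l * (- \<i> * of_real y) ^ (q - l))"
    by (simp only: binomial_ring)
  also have "\<dots> = (\<Sum>j\<le>p. \<Sum>l\<le>q. (of_nat (p choose j) * of_real x ^ j * (\<i> * of_real y) ^ (p - j)) *
      (of_nat (q choose l) * of_real x ^ l * (- \<i> * of_real y) ^ (q - l)))"
    by (simp add: sum_product)
  also have "\<dots> = (\<Sum>j\<le>p. \<Sum>l\<le>q. (of_nat (p choose j) * of_nat (q choose l) * \<i> ^ (p - j) * (- \<i>) ^ (q - l))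
        * (of_real (x ^ (j + l)) * of_real (y ^ (p - j + (q - l)))))"
    by (intro sum.cong refl)
       (simp only: of_real_mult of_real_power power_add power_mult_distrib mult_ac)
  finally show ?thesis .
qed

lemma has_bochner_integral_cgauss_monomial_expansion:
  assumes "s > 0"
  defines "\<sigma> \<equiv> sqrt (s / 2)"
  shows "has_bochner_integral (cgauss s) (\<lambda>z. z ^ p * cnj z ^ q)
    (\<Sum>j\<le>p. \<Sum>l\<le>q. (of_nat (p choose j) * of_nat (q choose l) * \<i> ^ (p - j) * (- \<i>) ^ (q - l))
        * (of_real (normal_moment \<sigma> (j + l)) * of_real (normal_moment \<sigma> (p - j + (q - l)))))"
proof -
  have \<sigma>: "\<sigma> > 0" using assms by simp
  define D where "D = density lborel (normal_density 0 \<sigma>)"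
  have "sigma_finite_measure D"
    unfolding D_def using prob_space_normal_density[OF \<sigma>] prob_space_imp_sigma_finite by blast
  moreover have "has_bochner_integral D (\<lambda>x. of_real (x ^ k)) (complex_of_real (normal_moment \<sigma> k))" for k
    unfolding D_def by (intro has_bochner_integral_of_real has_bochner_integral_normal_moment \<sigma>)
  ultimately have "has_bochner_integral (D \<Otimes>\<^sub>M D)
     (\<lambda>(x, y). \<Sum>j\<le>p. \<Sum>l\<le>q. (of_nat (p choose j) * of_nat (q choose l) * \<i> ^ (p - j) * (- \<i>) ^ (q - l))
        * (of_real (x ^ (j + l)) * of_real (y ^ (p - j + (q - l)))))
     (\<Sum>j\<le>p. \<Sum>l\<le>q. (of_nat (p choose j) * of_nat (q choose l) * \<i> ^ (p - j) * (- \<i>) ^ (q - l))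
        * (of_real (normal_moment \<sigma> (j + l)) * of_real (normal_moment \<sigma> (p - j + (q - l)))))"
    unfolding case_prod_beta
    by (intro has_bochner_integral_sum has_bochner_integral_mult_right has_bochner_integral_pair_mult)
  then have "has_bochner_integral (D \<Otimes>\<^sub>M D) (\<lambda>(x, y). Complex x y ^ p * cnj (Complex x y) ^ q)
     (\<Sum>j\<le>p. \<Sum>l\<le>q. (of_nat (p choose j) * of_nat (q choose l) * \<i> ^ (p - j) * (- \<i>) ^ (q - l))
        * (of_real (normal_moment \<sigma> (j + l)) * of_real (normal_moment \<sigma> (p - j + (q - l)))))"
    by (simp only: Complex_power_cnj_power)
  moreover have "(\<lambda>(x, y). Complex x y) \<in> measurable (D \<Otimes>\<^sub>M D) borel"
    unfolding D_def by (intro measurable_Complex_pair) auto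
  moreover have "(\<lambda>z::complex. z ^ p * cnj z ^ q) \<in> borel_measurable borel"
    by (intro borel_measurable_continuous_onI continuous_intros)
  ultimately show ?thesis
    unfolding cgauss_def D_def[symmetric] \<sigma>_def[symmetric]
    by (intro has_bochner_integral_distr) (simp_all add: split_beta')
qed

definition cgauss_moment :: "real \<Rightarrow> nat \<Rightarrow> nat \<Rightarrow> complex" where
  "cgauss_moment s p q = (if p = q then of_real (fact p * s ^ p) else 0)"

lemma has_bochner_integral_cgauss_moment:
  assumes s: "s > 0" and pq: "p + q \<le> 4"
  shows "has_bochner_integral (cgauss s) (\<lambda>z. z ^ p * cnj z ^ q) (cgauss_moment s p q)"
proof -
  let ?\<sigma> = "sqrt (s / 2)"
  have sq: "?\<sigma>\<^sup>2 = s / 2" using s by simp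
  then have sq4: "?\<sigma> ^ 4 = (s / 2)\<^sup>2"
    by (metis power_mult numeral_Bit0 mult_2 power_add power2_eq_square)
  have moments: "normal_moment ?\<sigma> (Suc 0) = 0" "normal_moment ?\<sigma> (Suc (Suc 0)) = ?\<sigma>\<^sup>2"
    "normal_moment ?\<sigma> (Suc (Suc (Suc 0))) = 0" "normal_moment ?\<sigma> (Suc (Suc (Suc (Suc 0)))) = 3 * ?\<sigma> ^ 4"
    using normal_moment_upto4[of ?\<sigma>] by (simp_all add: eval_nat_numeral)
  have "p \<in> {0, 1, 2, 3, 4}" "q \<in> {0, 1, 2, 3, 4}" using pq by auto
  then have "(\<Sum>j\<le>p. \<Sum>l\<le>q. (of_nat (p choose j) * of_nat (q choose l) * \<i> ^ (p - j) * (- \<i>) ^ (q - l))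
      * (of_real (normal_moment ?\<sigma> (j + l)) * of_real (normal_moment ?\<sigma> (p - j + (q - l)))))
      = cgauss_moment s p q"
    using pq s
    by (auto simp: atMost_Suc moments normal_moment_upto4 cgauss_moment_def sq sq4
        numeral_eq_Suc field_simps power2_eq_square)
  then show ?thesis using has_bochner_integral_cgauss_monomial_expansion[OF s, of p q] by simp
qed

definition cmonomial ::
  "'k set \<Rightarrow> ('k \<Rightarrow> 'w \<Rightarrow> complex) \<Rightarrow> ('k \<Rightarrow> nat) \<Rightarrow> ('k \<Rightarrow> nat) \<Rightarrow> 'w \<Rightarrow> complex" where
  "cmonomial K W p q w = (\<Prod>k\<in>K. W k w ^ p k * cnj (W k w) ^ q k)"

text \<open>Only moments up to order four enter the mean and variance of the energy detector; unlike
  joint Gaussianity, this property passes to product measures by Fubini alone.\<close>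
definition cgauss_moments4 ::
  "'w measure \<Rightarrow> 'k set \<Rightarrow> ('k \<Rightarrow> 'w \<Rightarrow> complex) \<Rightarrow> ('k \<Rightarrow> real) \<Rightarrow> bool" where
  "cgauss_moments4 S K W s \<longleftrightarrow> finite K \<and> prob_space S \<and> (\<forall>k\<in>K. W k \<in> borel_measurable S) \<and>
     (\<forall>p q. (\<Sum>k\<in>K. p k + q k) \<le> 4 \<longrightarrow>
        has_bochner_integral S (cmonomial K W p q) (\<Prod>k\<in>K. cgauss_moment (s k) (p k) (q k)))"

lemma cgauss_moments4_cgauss: "s > 0 \<Longrightarrow> cgauss_moments4 (cgauss s) {()} (\<lambda>_ z. z) (\<lambda>_. s)"
  unfolding cgauss_moments4_def cmonomial_def
  by (auto simp: prob_space_cgauss intro: has_bochner_integral_cgauss_moment)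

lemma cgauss_moments4_PiM:
  assumes fin: "finite I" and s: "\<And>i. i \<in> I \<Longrightarrow> s i > 0"
  shows "cgauss_moments4 (PiM I (\<lambda>i. cgauss (s i))) I (\<lambda>i x. x i) s"
proof -
  txt \<open>\<open>product_prob_space\<close> needs a probability space in every coordinate, also outside \<open>I\<close>.\<close>
  define s' where "s' i = (if i \<in> I then s i else 1)" for i
  have s': "s' i > 0" for i using s by (simp add: s'_def)
  have eqP: "PiM I (\<lambda>i. cgauss (s i)) = PiM I (\<lambda>i. cgauss (s' i))"
    by (rule PiM_cong) (auto simp: s'_def)
  interpret product_prob_space "\<lambda>i. cgauss (s' i)"
    by (rule product_prob_spaceI) (rule prob_space_cgauss[OF s'])
  have meas: "(\<lambda>x. x i) \<in> borel_measurable (PiM I (\<lambda>i. cgauss (s' i)))" if "i \<in> I" for i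
    using measurable_component_singleton[OF that, of "\<lambda>i. cgauss (s' i)"]
      measurable_cong_sets[OF refl sets_cgauss, of "PiM I (\<lambda>i. cgauss (s' i))" "s' i"] by blast
  have "has_bochner_integral (PiM I (\<lambda>i. cgauss (s' i))) (cmonomial I (\<lambda>i x. x i) p q)
      (\<Prod>k\<in>I. cgauss_moment (s k) (p k) (q k))"
    if pq: "(\<Sum>k\<in>I. p k + q k) \<le> 4" for p q
  proof -
    have hi: "has_bochner_integral (cgauss (s' i)) (\<lambda>z. z ^ p i * cnj z ^ q i) (cgauss_moment (s i) (p i) (q i))"
      if "i \<in> I" for i
    proof -
      have "p i + q i \<le> 4" using member_le_sum[OF that, of "\<lambda>k. p k + q k"] fin pq by auto
      then show ?thesis
        using has_bochner_integral_cgauss_moment[OF s'[of i]] that by (simp add: s'_def)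
    qed
    have "integrable (PiM I (\<lambda>i. cgauss (s' i))) (cmonomial I (\<lambda>i x. x i) p q)"
      unfolding cmonomial_def
      by (rule product_integrable_prod[OF fin]) (use hi in \<open>auto simp: has_bochner_integral_iff\<close>)
    moreover have "integral\<^sup>L (PiM I (\<lambda>i. cgauss (s' i))) (cmonomial I (\<lambda>i x. x i) p q)
        = (\<Prod>k\<in>I. cgauss_moment (s k) (p k) (q k))"
      unfolding cmonomial_def
      by (subst product_integral_prod[OF fin])
         (use hi in \<open>auto simp: has_bochner_integral_iff intro!: prod.cong\<close>)
    ultimately show ?thesis by (simp add: has_bochner_integral_iff)
  qed
  moreover have "prob_space (PiM I (\<lambda>i. cgauss (s' i)))"
    by (rule prob_space_PiM) (simp add: prob_space_cgauss s')
  ultimately show ?thesis unfolding eqP cgauss_moments4_def using fin meas by auto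
qed

lemma cgauss_moments4_pair:
  assumes m1: "cgauss_moments4 S1 K1 W1 s1" and m2: "cgauss_moments4 S2 K2 W2 s2"
  shows "cgauss_moments4 (S1 \<Otimes>\<^sub>M S2) (K1 <+> K2)
     (\<lambda>k w. case k of Inl k1 \<Rightarrow> W1 k1 (fst w) | Inr k2 \<Rightarrow> W2 k2 (snd w)) (case_sum s1 s2)"
proof -
  have f1: "finite K1" and p1: "prob_space S1" and me1: "\<And>k. k \<in> K1 \<Longrightarrow> W1 k \<in> borel_measurable S1"
    and h1: "\<And>p q. (\<Sum>k\<in>K1. p k + q k) \<le> 4 \<Longrightarrow>
      has_bochner_integral S1 (cmonomial K1 W1 p q) (\<Prod>k\<in>K1. cgauss_moment (s1 k) (p k) (q k))"
    using m1 unfolding cgauss_moments4_def by auto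
  have f2: "finite K2" and p2: "prob_space S2" and me2: "\<And>k. k \<in> K2 \<Longrightarrow> W2 k \<in> borel_measurable S2"
    and h2: "\<And>p q. (\<Sum>k\<in>K2. p k + q k) \<le> 4 \<Longrightarrow>
      has_bochner_integral S2 (cmonomial K2 W2 p q) (\<Prod>k\<in>K2. cgauss_moment (s2 k) (p k) (q k))"
    using m2 unfolding cgauss_moments4_def by auto
  let ?W = "\<lambda>k w. case k of Inl k1 \<Rightarrow> W1 k1 (fst w) | Inr k2 \<Rightarrow> W2 k2 (snd w)"
  have meas: "?W k \<in> borel_measurable (S1 \<Otimes>\<^sub>M S2)" if "k \<in> K1 <+> K2" for k
    using that me1 me2 by (auto intro: measurable_compose[OF measurable_fst] measurable_compose[OF measurable_snd])
  have "has_bochner_integral (S1 \<Otimes>\<^sub>M S2) (cmonomial (K1 <+> K2) ?W p q)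
      (\<Prod>k\<in>K1 <+> K2. cgauss_moment (case_sum s1 s2 k) (p k) (q k))"
    if pq: "(\<Sum>k\<in>K1 <+> K2. p k + q k) \<le> 4" for p q
  proof -
    have "(\<Sum>k\<in>K1 <+> K2. p k + q k) = (\<Sum>k\<in>K1. p (Inl k) + q (Inl k)) + (\<Sum>k\<in>K2. p (Inr k) + q (Inr k))"
      by (simp add: sum.Plus[OF f1 f2] comp_def)
    then have "(\<Sum>k\<in>K1. (p \<circ> Inl) k + (q \<circ> Inl) k) \<le> 4" "(\<Sum>k\<in>K2. (p \<circ> Inr) k + (q \<circ> Inr) k) \<le> 4"
      using pq by auto
    moreover have "sigma_finite_measure S1" "sigma_finite_measure S2"
      using p1 p2 prob_space_imp_sigma_finite by auto
    ultimately have "has_bochner_integral (S1 \<Otimes>\<^sub>M S2)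
        (\<lambda>w. cmonomial K1 W1 (p \<circ> Inl) (q \<circ> Inl) (fst w) * cmonomial K2 W2 (p \<circ> Inr) (q \<circ> Inr) (snd w))
        ((\<Prod>k\<in>K1. cgauss_moment (s1 k) ((p \<circ> Inl) k) ((q \<circ> Inl) k)) *
         (\<Prod>k\<in>K2. cgauss_moment (s2 k) ((p \<circ> Inr) k) ((q \<circ> Inr) k)))"
      using h1 h2 by (intro has_bochner_integral_pair_mult)
    then show ?thesis
      unfolding cmonomial_def by (simp add: prod.Plus[OF f1 f2] comp_def)
  qed
  then show ?thesis
    unfolding cgauss_moments4_def using f1 f2 p1 p2 meas by (auto intro: prob_space_pair)
qed

lemma prod_delta_power:
  assumes "finite K" "a \<in> K"
  shows "(\<Prod>k\<in>K. (f k :: 'a::comm_monoid_mult) ^ (if k = a then 1 else 0)) = f a"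
proof -
  have "(\<Prod>k\<in>K. f k ^ (if k = a then 1 else 0)) = (\<Prod>k\<in>K. if k = a then f k else 1)"
    by (intro prod.cong) auto
  also have "\<dots> = f a" using assms by (simp add: prod.delta)
  finally show ?thesis .
qed

lemma cgauss_moments4_second:
  assumes m: "cgauss_moments4 S K W s" and a: "a \<in> K" and b: "b \<in> K"
  shows "has_bochner_integral S (\<lambda>w. W a w * cnj (W b w)) (if a = b then of_real (s a) else 0)"
proof -
  have fin: "finite K" using m unfolding cgauss_moments4_def by auto
  define p where "p k = (if k = a then 1 else 0 :: nat)" for k
  define q where "q k = (if k = b then 1 else 0 :: nat)" for k
  have "(\<Sum>k\<in>K. p k + q k) = 2"
    using fin a b by (simp add: p_def q_def sum.distrib sum.delta)
  then have H: "has_bochner_integral S (cmonomial K W p q) (\<Prod>k\<in>K. cgauss_moment (s k) (p k) (q k))"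
    using m unfolding cgauss_moments4_def by simp
  have "cmonomial K W p q = (\<lambda>w. W a w * cnj (W b w))"
    unfolding cmonomial_def prod.distrib p_def q_def
    using prod_delta_power[OF fin a, of "\<lambda>k. W k _"] prod_delta_power[OF fin b, of "\<lambda>k. cnj (W k _)"]
    by (simp add: fun_eq_iff)
  moreover have "(\<Prod>k\<in>K. cgauss_moment (s k) (p k) (q k)) = (if a = b then of_real (s a) else 0)"
  proof (cases "a = b")
    case True
    have "(\<Prod>k\<in>K. cgauss_moment (s k) (p k) (q k)) = (\<Prod>k\<in>K. if k = a then cgauss_moment (s k) 1 1 else 1)"
      by (intro prod.cong) (auto simp: p_def q_def True cgauss_moment_def)
    then show ?thesis using True fin a by (simp add: prod.delta cgauss_moment_def)
  next
    case False
    then have "cgauss_moment (s a) (p a) (q a) = 0" by (simp add: p_def q_def cgauss_moment_def)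
    then show ?thesis using False fin a by (metis (no_types, lifting) prod_zero)
  qed
  ultimately show ?thesis using H by simp
qed

lemma cgauss_moments4_fourth:
  assumes m: "cgauss_moments4 S K W s" and a: "a \<in> K" and b: "b \<in> K" and c: "c \<in> K" and d: "d \<in> K"
  shows "has_bochner_integral S (\<lambda>w. W a w * cnj (W b w) * (W c w * cnj (W d w)))
     ((if a = b \<and> c = d then of_real (s a * s c) else 0) + (if a = d \<and> b = c then of_real (s a * s b) else 0))"
proof -
  have fin: "finite K" using m unfolding cgauss_moments4_def by auto
  define p where "p k = (if k = a then 1 else 0) + (if k = c then 1 else 0 :: nat)" for k
  define q where "q k = (if k = b then 1 else 0) + (if k = d then 1 else 0 :: nat)" for k
  have "(\<Sum>k\<in>K. p k + q k) = 4"
    using fin a b c d by (simp add: p_def q_def sum.distrib sum.delta)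
  then have H: "has_bochner_integral S (cmonomial K W p q) (\<Prod>k\<in>K. cgauss_moment (s k) (p k) (q k))"
    using m unfolding cgauss_moments4_def by simp
  have "cmonomial K W p q = (\<lambda>w. W a w * cnj (W b w) * (W c w * cnj (W d w)))"
    unfolding cmonomial_def prod.distrib p_def q_def power_add
    using prod_delta_power[OF fin a, of "\<lambda>k. W k _"] prod_delta_power[OF fin b, of "\<lambda>k. cnj (W k _)"]
      prod_delta_power[OF fin c, of "\<lambda>k. W k _"] prod_delta_power[OF fin d, of "\<lambda>k. cnj (W k _)"]
    by (simp add: fun_eq_iff mult_ac)
  moreover have "(\<Prod>k\<in>K. cgauss_moment (s k) (p k) (q k)) = (\<Prod>k\<in>{a, b, c, d}. cgauss_moment (s k) (p k) (q k))"
    using a b c d by (intro prod.mono_neutral_right[OF fin]) (auto simp: p_def q_def cgauss_moment_def)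
  moreover have "\<dots> = (if a = b \<and> c = d then of_real (s a * s c) else 0)
      + (if a = d \<and> b = c then of_real (s a * s b) else 0)"
    by (cases "a = b"; cases "a = c"; cases "a = d"; cases "b = c"; cases "b = d"; cases "c = d";
        simp add: p_def q_def cgauss_moment_def insert_commute)
  ultimately show ?thesis using H by simp
qed

lemma cgauss_moments4_hermitian_form:
  assumes m: "cgauss_moments4 S K W s"
  shows "has_bochner_integral S (\<lambda>w. (\<Sum>k\<in>K. c1 k * W k w) * cnj (\<Sum>k\<in>K. c2 k * W k w))
     (\<Sum>k\<in>K. c1 k * cnj (c2 k) * of_real (s k))"
proof -
  have fin: "finite K" using m unfolding cgauss_moments4_def by auto
  have "(\<Sum>k\<in>K. c1 k * W k w) * cnj (\<Sum>k\<in>K. c2 k * W k w) =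
      (\<Sum>a\<in>K. \<Sum>b\<in>K. (c1 a * cnj (c2 b)) * (W a w * cnj (W b w)))" for w
    by (simp add: sum_product cnj_sum mult_ac)
  moreover have "has_bochner_integral S (\<lambda>w. \<Sum>a\<in>K. \<Sum>b\<in>K. (c1 a * cnj (c2 b)) * (W a w * cnj (W b w)))
      (\<Sum>a\<in>K. \<Sum>b\<in>K. (c1 a * cnj (c2 b)) * (if a = b then of_real (s a) else 0))"
    by (intro has_bochner_integral_sum has_bochner_integral_mult_right cgauss_moments4_second[OF m])
  moreover have "(\<Sum>a\<in>K. \<Sum>b\<in>K. (c1 a * cnj (c2 b)) * (if a = b then of_real (s a) else 0))
      = (\<Sum>k\<in>K. c1 k * cnj (c2 k) * of_real (s k))"
    using fin by (simp add: if_distrib[of "\<lambda>x. _ * x"] sum.delta cong: if_cong)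
  ultimately show ?thesis by simp
qed

lemma sum4_delta_pairs_12_34:
  fixes f :: "'k \<Rightarrow> 'k \<Rightarrow> 'k \<Rightarrow> 'k \<Rightarrow> 'a::semiring_0"
  assumes "finite K"
  shows "(\<Sum>a\<in>K. \<Sum>b\<in>K. \<Sum>c\<in>K. \<Sum>d\<in>K. f a b c d * (if a = b \<and> c = d then x a c else 0))
    = (\<Sum>a\<in>K. \<Sum>c\<in>K. f a a c c * x a c)"
proof -
  have "(\<Sum>a\<in>K. \<Sum>b\<in>K. \<Sum>c\<in>K. \<Sum>d\<in>K. f a b c d * (if a = b \<and> c = d then x a c else 0)) =
      (\<Sum>a\<in>K. \<Sum>b\<in>K. if a = b then (\<Sum>c\<in>K. \<Sum>d\<in>K. if c = d then f a b c d * x a c else 0) else 0)"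
    by (intro sum.cong refl) (auto intro!: sum.cong)
  then show ?thesis using assms by (simp add: sum.delta)
qed

lemma sum4_delta_pairs_14_23:
  fixes f :: "'k \<Rightarrow> 'k \<Rightarrow> 'k \<Rightarrow> 'k \<Rightarrow> 'a::semiring_0"
  assumes "finite K"
  shows "(\<Sum>a\<in>K. \<Sum>b\<in>K. \<Sum>c\<in>K. \<Sum>d\<in>K. f a b c d * (if a = d \<and> b = c then x a b else 0))
    = (\<Sum>a\<in>K. \<Sum>b\<in>K. f a b b a * x a b)"
proof -
  have "(\<Sum>a\<in>K. \<Sum>b\<in>K. \<Sum>c\<in>K. \<Sum>d\<in>K. f a b c d * (if a = d \<and> b = c then x a b else 0)) =
      (\<Sum>a\<in>K. \<Sum>b\<in>K. \<Sum>c\<in>K. if b = c then (\<Sum>d\<in>K. if a = d then f a b c d * x a b else 0) else 0)"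
    by (intro sum.cong refl) (auto intro!: sum.cong)
  then show ?thesis using assms by (simp add: sum.delta)
qed

text \<open>Isserlis' theorem for circular variables: only the pairings \<open>(1,2)(3,4)\<close> and
  \<open>(1,4)(3,2)\<close> of conjugated with unconjugated factors survive.\<close>
lemma cgauss_moments4_hermitian_form_product:
  assumes m: "cgauss_moments4 S K W s"
  defines "G \<equiv> \<lambda>c e. (\<Sum>k\<in>K. c k * cnj (e k) * of_real (s k))"
  shows "has_bochner_integral S (\<lambda>w. (\<Sum>k\<in>K. c1 k * W k w) * cnj (\<Sum>k\<in>K. c2 k * W k w) *
       ((\<Sum>k\<in>K. c3 k * W k w) * cnj (\<Sum>k\<in>K. c4 k * W k w)))
     (G c1 c2 * G c3 c4 + G c1 c4 * G c3 c2)"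
proof -
  have fin: "finite K" using m unfolding cgauss_moments4_def by auto
  define f where "f a b c d = c1 a * cnj (c2 b) * (c3 c * cnj (c4 d))" for a b c d
  have hermitian: "(\<Sum>k\<in>K. c k * W k w) * cnj (\<Sum>k\<in>K. e k * W k w) =
      (\<Sum>a\<in>K. \<Sum>b\<in>K. (c a * cnj (e b)) * (W a w * cnj (W b w)))" for c e w
    by (simp add: sum_product cnj_sum mult_ac)
  have product: "(\<Sum>a\<in>K. \<Sum>b\<in>K. A a b) * (\<Sum>c\<in>K. \<Sum>d\<in>K. B c d)
      = (\<Sum>a\<in>K. \<Sum>b\<in>K. \<Sum>c\<in>K. \<Sum>d\<in>K. A a b * B c d)" for A B :: "_ \<Rightarrow> _ \<Rightarrow> complex"
    by (simp only: sum_product) (rule sum.cong[OF refl], rule sum.swap)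
  have "(\<Sum>k\<in>K. c1 k * W k w) * cnj (\<Sum>k\<in>K. c2 k * W k w) *
       ((\<Sum>k\<in>K. c3 k * W k w) * cnj (\<Sum>k\<in>K. c4 k * W k w)) =
      (\<Sum>a\<in>K. \<Sum>b\<in>K. \<Sum>c\<in>K. \<Sum>d\<in>K. f a b c d * (W a w * cnj (W b w) * (W c w * cnj (W d w))))" for w
    unfolding hermitian product by (intro sum.cong refl) (simp add: f_def mult_ac)
  moreover have "has_bochner_integral S
      (\<lambda>w. \<Sum>a\<in>K. \<Sum>b\<in>K. \<Sum>c\<in>K. \<Sum>d\<in>K. f a b c d * (W a w * cnj (W b w) * (W c w * cnj (W d w))))
      (\<Sum>a\<in>K. \<Sum>b\<in>K. \<Sum>c\<in>K. \<Sum>d\<in>K. f a b c d *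
        ((if a = b \<and> c = d then of_real (s a * s c) else 0) + (if a = d \<and> b = c then of_real (s a * s b) else 0)))"
    by (intro has_bochner_integral_sum has_bochner_integral_mult_right cgauss_moments4_fourth[OF m])
  moreover have "(\<Sum>a\<in>K. \<Sum>b\<in>K. \<Sum>c\<in>K. \<Sum>d\<in>K. f a b c d *
        ((if a = b \<and> c = d then of_real (s a * s c) else 0) + (if a = d \<and> b = c then of_real (s a * s b) else 0)))
      = G c1 c2 * G c3 c4 + G c1 c4 * G c3 c2"
    unfolding distrib_left sum.distrib sum4_delta_pairs_12_34[OF fin] sum4_delta_pairs_14_23[OF fin]
    by (simp add: G_def f_def sum_product mult_ac)
  ultimately show ?thesis by simp
qed

section \<open>Mean and variance of the energy detector\<close>

definition sig_index :: "nat \<Rightarrow> nat \<Rightarrow> (unit + (nat + nat)) set" where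
  "sig_index N M = {()} <+> ({..<N} <+> {..<M})"

definition sig_coord ::
  "unit + (nat + nat) \<Rightarrow> complex \<times> (nat \<Rightarrow> complex) \<times> (nat \<Rightarrow> complex) \<Rightarrow> complex" where
  "sig_coord k w =
     (case k of Inl _ \<Rightarrow> fst w | Inr (Inl i) \<Rightarrow> fst (snd w) i | Inr (Inr m) \<Rightarrow> snd (snd w) m)"

definition sig_var :: "real \<Rightarrow> (nat \<Rightarrow> real) \<Rightarrow> real \<Rightarrow> unit + (nat + nat) \<Rightarrow> real" where
  "sig_var st2 sv2 sn2 k = (case k of Inl _ \<Rightarrow> st2 | Inr (Inl i) \<Rightarrow> sv2 i | Inr (Inr m) \<Rightarrow> sn2)"

lemma cgauss_moments4_sig_space:
  assumes "st2 > 0" "sn2 > 0" "\<And>i. i < N \<Longrightarrow> sv2 i > 0"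
  shows "cgauss_moments4 (sig_space N M st2 sv2 sn2) (sig_index N M) sig_coord (sig_var st2 sv2 sn2)"
proof -
  have "cgauss_moments4 (sig_space N M st2 sv2 sn2) (sig_index N M)
     (\<lambda>k w. case k of Inl k1 \<Rightarrow> (\<lambda>_ z. z) k1 (fst w) | Inr k2 \<Rightarrow>
        (\<lambda>k w. case k of Inl k1 \<Rightarrow> (\<lambda>i x. x i) k1 (fst w) | Inr k2 \<Rightarrow> (\<lambda>i x. x i) k2 (snd w)) k2 (snd w))
     (case_sum (\<lambda>_. st2) (case_sum sv2 (\<lambda>_. sn2)))"
    unfolding sig_space_def sig_index_def
    by (intro cgauss_moments4_pair cgauss_moments4_cgauss cgauss_moments4_PiM) (use assms in auto)
  then show ?thesis
    unfolding sig_coord_def sig_var_def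
    by (simp add: case_sum_def split: sum.split cong: sum.case_cong)
qed

definition obs_coeff ::
  "nat \<Rightarrow> (nat \<Rightarrow> nat \<Rightarrow> complex) \<Rightarrow> (nat \<Rightarrow> complex) \<Rightarrow> bool \<Rightarrow> nat \<Rightarrow> unit + (nat + nat) \<Rightarrow> complex" where
  "obs_coeff N H a hyp m k = (case k of Inl _ \<Rightarrow> (if hyp then (\<Sum>i<N. H m i * a i) else 0)
      | Inr (Inl i) \<Rightarrow> H m i * a i | Inr (Inr m') \<Rightarrow> (if m' = m then 1 else 0))"

lemma obs_eq_linear_form:
  assumes "m < M"
  shows "obs N H a hyp w m = (\<Sum>k\<in>sig_index N M. obs_coeff N H a hyp m k * sig_coord k w)"
proof -
  obtain t v n where w: "w = (t, v, n)" by (cases w) auto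
  have "(\<Sum>m'<M. (if m' = m then 1 else 0) * n m') = n m"
    using assms by (simp add: if_distrib[of "\<lambda>x. x * _"] cong: if_cong)
  then show ?thesis
    unfolding sig_index_def by (simp add: sum.Plus comp_def obs_coeff_def sig_coord_def obs_def w)
qed

definition obs_cov ::
  "nat \<Rightarrow> (nat \<Rightarrow> nat \<Rightarrow> complex) \<Rightarrow> (nat \<Rightarrow> complex) \<Rightarrow> bool \<Rightarrow> real \<Rightarrow> (nat \<Rightarrow> real) \<Rightarrow> real
   \<Rightarrow> nat \<Rightarrow> nat \<Rightarrow> complex" where
  "obs_cov N H a hyp st2 sv2 sn2 m m' =
     (if hyp then of_real st2 * (\<Sum>i<N. H m i * a i) * cnj (\<Sum>i<N. H m' i * a i) else 0)
     + (\<Sum>i<N. H m i * a i * cnj (H m' i * a i) * of_real (sv2 i)) + (if m = m' then of_real sn2 else 0)"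

lemma obs_cov_eq_sum:
  assumes "m < M" "m' < M"
  shows "obs_cov N H a hyp st2 sv2 sn2 m m' = (\<Sum>k\<in>sig_index N M.
     obs_coeff N H a hyp m k * cnj (obs_coeff N H a hyp m' k) * of_real (sig_var st2 sv2 sn2 k))"
  using assms unfolding obs_cov_def sig_index_def
  by (simp add: sum.Plus comp_def obs_coeff_def sig_var_def if_distrib[of "\<lambda>x. x * _"] cong: if_cong)

lemma obs_cov_signal:
  "obs_cov N H a True st2 sv2 sn2 m m - obs_cov N H a False st2 sv2 sn2 m m
    = of_real st2 * ((\<Sum>i<N. H m i * a i) * cnj (\<Sum>i<N. H m i * a i))"
  by (simp add: obs_cov_def)

lemma obs_cov_swap: "obs_cov N H a hyp st2 sv2 sn2 m' m = cnj (obs_cov N H a hyp st2 sv2 sn2 m m')"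
  unfolding obs_cov_def by (simp add: cnj_sum mult_ac)

lemma obs_cov_diag_real: "obs_cov N H a hyp st2 sv2 sn2 m m \<in> \<real>"
  using obs_cov_swap[of N H a hyp st2 sv2 sn2 m m] by (simp add: Reals_cnj_iff)

context
  fixes N M :: nat and st2 sn2 :: real and sv2 :: "nat \<Rightarrow> real"
    and H :: "nat \<Rightarrow> nat \<Rightarrow> complex" and a :: "nat \<Rightarrow> complex"
  assumes pos: "st2 > 0" "sn2 > 0" "\<And>i. i < N \<Longrightarrow> sv2 i > 0"
begin

lemma has_bochner_integral_obs_cov:
  assumes "m < M" "m' < M"
  shows "has_bochner_integral (sig_space N M st2 sv2 sn2)
     (\<lambda>w. obs N H a hyp w m * cnj (obs N H a hyp w m')) (obs_cov N H a hyp st2 sv2 sn2 m m')"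
  unfolding obs_eq_linear_form[OF assms(1)] obs_eq_linear_form[OF assms(2)] obs_cov_eq_sum[OF assms]
  by (rule cgauss_moments4_hermitian_form[OF cgauss_moments4_sig_space[OF pos]])

lemma has_bochner_integral_obs_fourth:
  assumes "m < M" "m' < M"
  shows "has_bochner_integral (sig_space N M st2 sv2 sn2)
     (\<lambda>w. obs N H a hyp w m * cnj (obs N H a hyp w m) * (obs N H a hyp w m' * cnj (obs N H a hyp w m')))
     (obs_cov N H a hyp st2 sv2 sn2 m m * obs_cov N H a hyp st2 sv2 sn2 m' m'
      + obs_cov N H a hyp st2 sv2 sn2 m m' * obs_cov N H a hyp st2 sv2 sn2 m' m)"
  unfolding obs_eq_linear_form[OF assms(1)] obs_eq_linear_form[OF assms(2)]
    obs_cov_eq_sum[OF assms] obs_cov_eq_sum[OF assms(1,1)] obs_cov_eq_sum[OF assms(2,2)]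
    obs_cov_eq_sum[OF assms(2,1)]
  by (rule cgauss_moments4_hermitian_form_product[OF cgauss_moments4_sig_space[OF pos]])

lemma has_bochner_integral_energy:
  "has_bochner_integral (sig_space N M st2 sv2 sn2) (energy N M H a hyp)
     (1 / real M * (\<Sum>m<M. Re (obs_cov N H a hyp st2 sv2 sn2 m m)))"
proof -
  have "has_bochner_integral (sig_space N M st2 sv2 sn2)
      (\<lambda>w. Re (\<Sum>m<M. obs N H a hyp w m * cnj (obs N H a hyp w m)))
      (Re (\<Sum>m<M. obs_cov N H a hyp st2 sv2 sn2 m m))"
    by (intro has_bochner_integral_Re has_bochner_integral_sum has_bochner_integral_obs_cov) auto
  then show ?thesis
    unfolding energy_def
    by (intro has_bochner_integral_mult_right)
       (simp only: complex_norm_square[symmetric] Re_sum Re_complex_of_real)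
qed

lemma has_bochner_integral_energy_sq:
  "has_bochner_integral (sig_space N M st2 sv2 sn2) (\<lambda>w. (energy N M H a hyp w)\<^sup>2)
     ((1 / real M)\<^sup>2 * (\<Sum>m<M. \<Sum>m'<M. Re (obs_cov N H a hyp st2 sv2 sn2 m m * obs_cov N H a hyp st2 sv2 sn2 m' m'
        + obs_cov N H a hyp st2 sv2 sn2 m m' * obs_cov N H a hyp st2 sv2 sn2 m' m)))"
proof -
  have "has_bochner_integral (sig_space N M st2 sv2 sn2)
      (\<lambda>w. Re (\<Sum>m<M. \<Sum>m'<M. obs N H a hyp w m * cnj (obs N H a hyp w m)
        * (obs N H a hyp w m' * cnj (obs N H a hyp w m'))))
      (Re (\<Sum>m<M. \<Sum>m'<M. obs_cov N H a hyp st2 sv2 sn2 m m * obs_cov N H a hyp st2 sv2 sn2 m' m'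
        + obs_cov N H a hyp st2 sv2 sn2 m m' * obs_cov N H a hyp st2 sv2 sn2 m' m))"
    by (intro has_bochner_integral_Re has_bochner_integral_sum has_bochner_integral_obs_fourth) auto
  then show ?thesis
    unfolding energy_def power_mult_distrib
    by (intro has_bochner_integral_mult_right)
       (simp only: complex_norm_square[symmetric] of_real_mult[symmetric] Re_sum Re_complex_of_real
         power2_eq_square[of "sum _ _"] sum_product)
qed

lemma deflection_eq_obs_cov:
  "deflection N M st2 sv2 sn2 H a =
    (1 / real M * (\<Sum>m<M. Re (obs_cov N H a True st2 sv2 sn2 m m - obs_cov N H a False st2 sv2 sn2 m m)))\<^sup>2 /
    ((1 / real M)\<^sup>2 * (\<Sum>m<M. \<Sum>m'<M. (cmod (obs_cov N H a False st2 sv2 sn2 m m'))\<^sup>2))"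
proof -
  interpret prob_space "sig_space N M st2 sv2 sn2"
    using cgauss_moments4_sig_space[OF pos] unfolding cgauss_moments4_def by auto
  let ?C = "obs_cov N H a False st2 sv2 sn2" and ?T = "energy N M H a False"
  note T = has_bochner_integral_energy[of False] has_bochner_integral_energy_sq[of False]
  have "variance ?T = expectation (\<lambda>w. (?T w)\<^sup>2) - (expectation ?T)\<^sup>2"
    using T by (intro variance_eq) (auto simp: has_bochner_integral_iff)
  also have "\<dots> = (1 / real M)\<^sup>2 * (\<Sum>m<M. \<Sum>m'<M. Re (?C m m * ?C m' m' + ?C m m' * ?C m' m))
      - (1 / real M * (\<Sum>m<M. Re (?C m m)))\<^sup>2"
    unfolding has_bochner_integral_integral_eq[OF T(1)] has_bochner_integral_integral_eq[OF T(2)] ..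
  also have "\<dots> = (1 / real M)\<^sup>2 * (\<Sum>m<M. \<Sum>m'<M. (cmod (?C m m'))\<^sup>2)"
  proof -
    have "Re (?C m m * ?C m' m' + ?C m m' * ?C m' m) = Re (?C m m) * Re (?C m' m') + (cmod (?C m m'))\<^sup>2"
      for m m'
      using obs_cov_diag_real[of N H a False st2 sv2 sn2 m] obs_cov_diag_real[of N H a False st2 sv2 sn2 m']
      by (simp add: obs_cov_swap[of N H a False st2 sv2 sn2 m' m] complex_is_Real_iff)
         (simp add: cmod_power2 flip: power2_eq_square)
    then show ?thesis
      by (simp add: sum.distrib power_mult_distrib power2_eq_square sum_product algebra_simps)
  qed
  finally show ?thesis
    using has_bochner_integral_energy[of True] has_bochner_integral_energy[of False]
    unfolding deflection_def Let_def
    by (simp add: has_bochner_integral_iff sum_subtractf diff_divide_distrib)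
qed

end

section \<open>The deflection as a function of the channel Gram matrix\<close>

definition gram :: "(nat \<times> nat \<Rightarrow> complex) \<Rightarrow> nat \<Rightarrow> nat \<Rightarrow> nat \<Rightarrow> complex" where
  "gram h M i j = (\<Sum>m<M. h (m, i) * cnj (h (m, j)))"

lemma sum_swap_pairs:
  "(\<Sum>a\<in>A. \<Sum>b\<in>B. \<Sum>c\<in>C. \<Sum>d\<in>D. f a b c d) = (\<Sum>c\<in>C. \<Sum>d\<in>D. \<Sum>a\<in>A. \<Sum>b\<in>B. f a b c d)"
proof -
  have "(\<Sum>a\<in>A. \<Sum>b\<in>B. \<Sum>c\<in>C. \<Sum>d\<in>D. f a b c d) = (\<Sum>a\<in>A. \<Sum>c\<in>C. \<Sum>b\<in>B. \<Sum>d\<in>D. f a b c d)"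
    by (rule sum.cong[OF refl], rule sum.swap)
  also have "\<dots> = (\<Sum>c\<in>C. \<Sum>a\<in>A. \<Sum>d\<in>D. \<Sum>b\<in>B. f a b c d)"
    by (subst sum.swap) (rule sum.cong[OF refl], rule sum.cong[OF refl], rule sum.swap)
  also have "\<dots> = (\<Sum>c\<in>C. \<Sum>d\<in>D. \<Sum>a\<in>A. \<Sum>b\<in>B. f a b c d)"
    by (rule sum.cong[OF refl], rule sum.swap)
  finally show ?thesis .
qed

lemma sum_rows_hermitian_eq_gram:
  "(\<Sum>m<M. (\<Sum>i<N. h (m, i) * c i) * cnj (\<Sum>i<N. h (m, i) * c i)) =
     (\<Sum>i<N. \<Sum>j<N. c i * cnj (c j) * gram h M i j)"
proof -
  have "(\<Sum>m<M. (\<Sum>i<N. h (m, i) * c i) * cnj (\<Sum>i<N. h (m, i) * c i)) =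
     (\<Sum>m<M. \<Sum>i<N. \<Sum>j<N. h (m, i) * c i * cnj (h (m, j) * c j))"
    by (simp add: sum_product cnj_sum)
  also have "\<dots> = (\<Sum>i<N. \<Sum>j<N. \<Sum>m<M. h (m, i) * c i * cnj (h (m, j) * c j))"
    by (subst sum.swap) (rule sum.cong[OF refl], rule sum.swap)
  also have "\<dots> = (\<Sum>i<N. \<Sum>j<N. c i * cnj (c j) * gram h M i j)"
    by (simp add: gram_def sum_distrib_left mult_ac)
  finally show ?thesis .
qed

text \<open>The Frobenius norms of \<open>H W H\<^sup>H\<close> and \<open>W\<^sup>1\<^sup>/\<^sup>2 H\<^sup>H H W\<^sup>1\<^sup>/\<^sup>2\<close> agree, for diagonal \<open>W\<close>.\<close>
lemma frobenius_weighted_outer_eq_gram: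
  fixes w :: "nat \<Rightarrow> real"
  shows "(\<Sum>m<M. \<Sum>m'<M. (cmod (\<Sum>i<N. h (m, i) * cnj (h (m', i)) * of_real (w i)))\<^sup>2) =
     (\<Sum>i<N. \<Sum>j<N. w i * w j * (cmod (gram h M i j))\<^sup>2)"
proof -
  have "complex_of_real (\<Sum>m<M. \<Sum>m'<M. (cmod (\<Sum>i<N. h (m, i) * cnj (h (m', i)) * of_real (w i)))\<^sup>2) =
     (\<Sum>m<M. \<Sum>m'<M. \<Sum>i<N. \<Sum>j<N.
        h (m, i) * cnj (h (m', i)) * of_real (w i) * cnj (h (m, j) * cnj (h (m', j)) * of_real (w j)))"
    by (simp only: of_real_sum complex_norm_square sum_product cnj_sum)
  also have "\<dots> = (\<Sum>i<N. \<Sum>j<N. \<Sum>m<M. \<Sum>m'<M.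
        h (m, i) * cnj (h (m', i)) * of_real (w i) * cnj (h (m, j) * cnj (h (m', j)) * of_real (w j)))"
    by (rule sum_swap_pairs)
  also have "\<dots> = (\<Sum>i<N. \<Sum>j<N. \<Sum>m'<M. \<Sum>m<M.
        h (m, i) * cnj (h (m', i)) * of_real (w i) * cnj (h (m, j) * cnj (h (m', j)) * of_real (w j)))"
    by (rule sum.cong[OF refl], rule sum.cong[OF refl], rule sum.swap)
  also have "\<dots> = (\<Sum>i<N. \<Sum>j<N. of_real (w i * w j) * (gram h M i j * cnj (gram h M i j)))"
    by (simp add: gram_def sum_product sum_distrib_left cnj_sum mult_ac)
  also have "\<dots> = complex_of_real (\<Sum>i<N. \<Sum>j<N. w i * w j * (cmod (gram h M i j))\<^sup>2)"
    by (simp only: of_real_sum of_real_mult complex_norm_square)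
  finally show ?thesis by (simp only: of_real_eq_iff)
qed

lemma cmod_add_of_real_power2: "(cmod (z + complex_of_real r))\<^sup>2 = (cmod z)\<^sup>2 + 2 * r * Re z + r\<^sup>2"
  by (simp only: cmod_power2) (simp add: power2_eq_square algebra_simps)

lemma frobenius_weighted_outer_plus_identity:
  fixes N :: nat and h :: "nat \<times> nat \<Rightarrow> complex" and w :: "nat \<Rightarrow> real"
  defines "A \<equiv> \<lambda>m m'. \<Sum>i<N. h (m, i) * cnj (h (m', i)) * of_real (w i)"
  shows "(\<Sum>m<M. \<Sum>m'<M. (cmod (A m m' + (if m = m' then of_real s else 0)))\<^sup>2) =
      (\<Sum>i<N. \<Sum>j<N. w i * w j * (cmod (gram h M i j))\<^sup>2)
      + 2 * s * Re (\<Sum>i<N. of_real (w i) * gram h M i i) + real M * s\<^sup>2"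
proof -
  have diag: "(\<Sum>m<M. A m m) = (\<Sum>i<N. of_real (w i) * gram h M i i)"
    unfolding A_def gram_def by (subst sum.swap) (simp add: sum_distrib_left mult_ac)
  have "(\<Sum>m<M. \<Sum>m'<M. (cmod (A m m' + (if m = m' then of_real s else 0)))\<^sup>2) =
      (\<Sum>m<M. \<Sum>m'<M. (cmod (A m m'))\<^sup>2 + (if m = m' then 2 * s * Re (A m m) + s\<^sup>2 else 0))"
    by (intro sum.cong refl) (auto simp: cmod_add_of_real_power2)
  also have "\<dots> = (\<Sum>m<M. \<Sum>m'<M. (cmod (A m m'))\<^sup>2) + (\<Sum>m<M. 2 * s * Re (A m m) + s\<^sup>2)"
    by (simp add: sum.distrib)
  also have "(\<Sum>m<M. 2 * s * Re (A m m) + s\<^sup>2) = 2 * s * Re (\<Sum>i<N. of_real (w i) * gram h M i i) + real M * s\<^sup>2"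
    unfolding diag[symmetric] by (simp add: sum.distrib sum_distrib_left Re_sum)
  finally show ?thesis
    unfolding A_def frobenius_weighted_outer_eq_gram by simp
qed

lemma deflection_eq_gram:
  fixes h :: "nat \<times> nat \<Rightarrow> complex" and a :: "nat \<Rightarrow> complex" and g :: "nat \<Rightarrow> real"
  assumes pos: "st2 > 0" "sn2 > 0" "\<And>i. i < N \<Longrightarrow> sv2 i > 0"
  defines "c \<equiv> \<lambda>i. a i * complex_of_real (g i)"
  defines "w \<equiv> \<lambda>i. (cmod (c i))\<^sup>2 * sv2 i"
  shows "deflection N M st2 sv2 sn2 (\<lambda>m i. h (m, i) * of_real (g i)) a =
   (1 / real M * (st2 * Re (\<Sum>i<N. \<Sum>j<N. c i * cnj (c j) * gram h M i j)))\<^sup>2 /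
   ((1 / real M)\<^sup>2 * ((\<Sum>i<N. \<Sum>j<N. w i * w j * (cmod (gram h M i j))\<^sup>2)
       + 2 * sn2 * Re (\<Sum>i<N. of_real (w i) * gram h M i i) + real M * sn2\<^sup>2))"
proof -
  let ?C = "obs_cov N (\<lambda>m i. h (m, i) * of_real (g i)) a"
  have "(\<Sum>m<M. Re (?C True st2 sv2 sn2 m m - ?C False st2 sv2 sn2 m m)) =
      st2 * Re (\<Sum>i<N. \<Sum>j<N. c i * cnj (c j) * gram h M i j)"
    unfolding obs_cov_signal sum_rows_hermitian_eq_gram[symmetric]
    by (simp add: sum_distrib_left c_def mult_ac)
  moreover have "?C False st2 sv2 sn2 m m' =
      (\<Sum>i<N. h (m, i) * cnj (h (m', i)) * of_real (w i)) + (if m = m' then of_real sn2 else 0)" for m m'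
  proof -
    have "complex_of_real (w i) = a i * of_real (g i) * cnj (a i * of_real (g i)) * of_real (sv2 i)" for i
      by (simp only: w_def c_def of_real_mult complex_norm_square)
    then have "h (m, i) * of_real (g i) * a i * cnj (h (m', i) * of_real (g i) * a i) * of_real (sv2 i)
        = h (m, i) * cnj (h (m', i)) * of_real (w i)" for i
      by (simp add: mult_ac)
    then show ?thesis unfolding obs_cov_def by (simp only: if_False add_0_left)
  qed
  ultimately show ?thesis
    by (simp only: deflection_eq_obs_cov[OF pos] frobenius_weighted_outer_plus_identity)
qed

lemma rescale_deflection_ratio:
  fixes t x y z :: real
  assumes "t > 0"
  shows "(1 / t ^ 4 * (st2 * (t\<^sup>2 * x)))\<^sup>2 / ((1 / t ^ 4)\<^sup>2 * (t ^ 4 * y + 2 * sn2 * (t\<^sup>2 * z) + t ^ 4 * sn2\<^sup>2))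
    = (st2 * x)\<^sup>2 / (y + 2 * sn2 / t\<^sup>2 * z + sn2\<^sup>2)"
proof -
  have "(1 / t ^ 4 * (st2 * (t\<^sup>2 * x)))\<^sup>2 = (st2 * x)\<^sup>2 / t ^ 4"
    "(1 / t ^ 4)\<^sup>2 * (t ^ 4 * y + 2 * sn2 * (t\<^sup>2 * z) + t ^ 4 * sn2\<^sup>2) = (y + 2 * sn2 / t\<^sup>2 * z + sn2\<^sup>2) / t ^ 4"
    using assms by (simp_all add: field_simps power2_eq_square power4_eq_xxxx)
  then show ?thesis using assms by simp
qed

lemma deflection_eq_normalized_gram:
  fixes h :: "nat \<times> nat \<Rightarrow> complex" and a :: "nat \<Rightarrow> complex" and g :: "nat \<Rightarrow> real"
  assumes pos: "st2 > 0" "sn2 > 0" "\<And>i. i < N \<Longrightarrow> sv2 i > 0" and M: "M \<ge> 1"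
  defines "u \<equiv> \<lambda>i. complex_of_real (sqrt (sqrt M) * g i) * a i"
  defines "K \<equiv> \<lambda>i. (cmod (u i))\<^sup>2 * sv2 i"
  defines "R \<equiv> \<lambda>i j. gram h M i j / of_nat M"
  shows "deflection N M st2 sv2 sn2 (\<lambda>m i. h (m, i) * of_real (g i)) a =
    (st2 * Re (\<Sum>i<N. \<Sum>j<N. u i * cnj (u j) * R i j))\<^sup>2 /
    ((\<Sum>i<N. \<Sum>j<N. K i * K j * (cmod (R i j))\<^sup>2)
      + 2 * sn2 / sqrt M * Re (\<Sum>i<N. of_real (K i) * R i i) + sn2\<^sup>2)"
proof -
  define t where "t = sqrt (sqrt M)"
  have t2: "t\<^sup>2 = sqrt M" by (simp add: t_def)
  have "t ^ 4 = (t\<^sup>2)\<^sup>2" by (simp flip: power_mult)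
  then have t: "t > 0" "t\<^sup>2 = sqrt M" "t ^ 4 = M"
    using M t2 by (simp_all add: t_def)
  define c where "c i = a i * complex_of_real (g i)" for i
  define w where "w i = (cmod (c i))\<^sup>2 * sv2 i" for i
  have gram: "gram h M i j = of_real (t ^ 4) * R i j" for i j
    using M by (simp add: R_def t)
  have cc: "c i * cnj (c j) = u i * cnj (u j) / of_real (t\<^sup>2)" for i j
    using t(1) by (simp add: c_def u_def t_def[symmetric] power2_eq_square field_simps)
  have w: "w i = K i / t\<^sup>2" for i
    using t(1) by (simp add: w_def K_def c_def u_def t_def[symmetric] norm_mult power_mult_distrib field_simps)
  let ?S1 = "\<Sum>i<N. \<Sum>j<N. u i * cnj (u j) * R i j"
  let ?S2 = "\<Sum>i<N. \<Sum>j<N. K i * K j * (cmod (R i j))\<^sup>2"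
  let ?S3 = "\<Sum>i<N. of_real (K i) * R i i"
  have "(\<Sum>i<N. \<Sum>j<N. c i * cnj (c j) * gram h M i j) = of_real (t\<^sup>2) * ?S1"
    using t(1) by (simp add: cc gram sum_distrib_left power4_eq_xxxx power2_eq_square field_simps)
  then have S1: "Re (\<Sum>i<N. \<Sum>j<N. c i * cnj (c j) * gram h M i j) = t\<^sup>2 * Re ?S1"
    by simp
  have S2: "(\<Sum>i<N. \<Sum>j<N. w i * w j * (cmod (gram h M i j))\<^sup>2) = t ^ 4 * ?S2"
    using t(1) by (simp add: w gram sum_distrib_left norm_mult power_mult_distrib power4_eq_xxxx
        power2_eq_square field_simps)
  have "(\<Sum>i<N. of_real (w i) * gram h M i i) = of_real (t\<^sup>2) * ?S3"
    using t(1) by (simp add: w gram sum_distrib_left power4_eq_xxxx power2_eq_square field_simps)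
  then have S3: "Re (\<Sum>i<N. of_real (w i) * gram h M i i) = t\<^sup>2 * Re ?S3"
    by simp
  have "deflection N M st2 sv2 sn2 (\<lambda>m i. h (m, i) * of_real (g i)) a =
      (1 / real M * (st2 * Re (\<Sum>i<N. \<Sum>j<N. c i * cnj (c j) * gram h M i j)))\<^sup>2 /
      ((1 / real M)\<^sup>2 * ((\<Sum>i<N. \<Sum>j<N. w i * w j * (cmod (gram h M i j))\<^sup>2)
        + 2 * sn2 * Re (\<Sum>i<N. of_real (w i) * gram h M i i) + real M * sn2\<^sup>2))"
    unfolding c_def w_def by (rule deflection_eq_gram[OF pos])
  also have "\<dots> = (st2 * Re ?S1)\<^sup>2 / (?S2 + 2 * sn2 / t\<^sup>2 * Re ?S3 + sn2\<^sup>2)"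
    unfolding S1 S2 S3 t(3)[symmetric] by (rule rescale_deflection_ratio[OF t(1)])
  finally show ?thesis unfolding t(2) .
qed

lemma tendsto_hermitian_form_identity:
  fixes R :: "nat \<Rightarrow> nat \<Rightarrow> nat \<Rightarrow> complex" and u :: "nat \<Rightarrow> nat \<Rightarrow> complex"
  assumes R: "\<And>i j. i < N \<Longrightarrow> j < N \<Longrightarrow> (\<lambda>n. R n i j) \<longlonglongrightarrow> (if i = j then 1 else 0)"
    and u: "\<And>i. i < N \<Longrightarrow> eventually (\<lambda>n. (cmod (u n i))\<^sup>2 = q i) sequentially"
  shows "(\<lambda>n. \<Sum>i<N. \<Sum>j<N. u n i * cnj (u n j) * R n i j) \<longlonglongrightarrow> of_real (\<Sum>i<N. q i)"
proof -
  let ?\<delta> = "\<lambda>i j. if i = j then 1 else 0 :: complex"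
  have norm_u: "eventually (\<lambda>n. cmod (u n i) = sqrt (q i)) sequentially" if "i < N" for i
    using u[OF that] by eventually_elim (metis abs_norm_cancel real_sqrt_abs)
  have "(\<lambda>n. u n i * cnj (u n j) * (R n i j - ?\<delta> i j)) \<longlonglongrightarrow> 0" if "i < N" "j < N" for i j
  proof (rule tendsto_0_le)
    show "(\<lambda>n. R n i j - ?\<delta> i j) \<longlonglongrightarrow> 0" using R[OF that] by (rule LIM_zero)
    show "eventually (\<lambda>n. norm (u n i * cnj (u n j) * (R n i j - ?\<delta> i j))
        \<le> norm (R n i j - ?\<delta> i j) * (sqrt (q i) * sqrt (q j))) sequentially"
      using norm_u[OF that(1)] norm_u[OF that(2)] by eventually_elim (simp add: norm_mult mult_ac)
  qed
  then have "(\<lambda>n. of_real (\<Sum>i<N. q i) + (\<Sum>i<N. \<Sum>j<N. u n i * cnj (u n j) * (R n i j - ?\<delta> i j)))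
      \<longlonglongrightarrow> of_real (\<Sum>i<N. q i) + (\<Sum>i<N. \<Sum>j<N. 0)"
    by (intro tendsto_add tendsto_const tendsto_sum) auto
  moreover have "eventually (\<lambda>n. \<forall>i\<in>{..<N}. (cmod (u n i))\<^sup>2 = q i) sequentially"
    using u by (intro eventually_ball_finite) auto
  then have "eventually (\<lambda>n. of_real (\<Sum>i<N. q i) + (\<Sum>i<N. \<Sum>j<N. u n i * cnj (u n j) * (R n i j - ?\<delta> i j))
      = (\<Sum>i<N. \<Sum>j<N. u n i * cnj (u n j) * R n i j)) sequentially"
  proof eventually_elim
    case (elim n)
    have "(\<Sum>i<N. \<Sum>j<N. u n i * cnj (u n j) * ?\<delta> i j) = (\<Sum>i<N. u n i * cnj (u n i))"
      by (simp add: if_distrib[of "\<lambda>x. _ * x"] cong: if_cong)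
    also have "\<dots> = of_real (\<Sum>i<N. q i)"
      using elim by (auto simp: of_real_sum simp flip: complex_norm_square intro!: sum.cong)
    finally have "(\<Sum>i<N. \<Sum>j<N. u n i * cnj (u n j) * ?\<delta> i j) = of_real (\<Sum>i<N. q i)" .
    then show ?case by (simp add: algebra_simps sum.distrib sum_subtractf)
  qed
  ultimately show ?thesis by (simp add: Lim_transform_eventually)
qed

lemma tendsto_deflection_denominator:
  fixes R :: "nat \<Rightarrow> nat \<Rightarrow> nat \<Rightarrow> complex" and K :: "nat \<Rightarrow> nat \<Rightarrow> real"
  assumes R: "\<And>i j. i < N \<Longrightarrow> j < N \<Longrightarrow> (\<lambda>n. R n i j) \<longlonglongrightarrow> (if i = j then 1 else 0)"
    and K: "\<And>i. i < N \<Longrightarrow> (\<lambda>n. K n i) \<longlonglongrightarrow> k i"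
  shows "(\<lambda>n. (\<Sum>i<N. \<Sum>j<N. K n i * K n j * (cmod (R n i j))\<^sup>2)
        + 2 * s / sqrt n * Re (\<Sum>i<N. of_real (K n i) * R n i i) + s\<^sup>2)
      \<longlonglongrightarrow> (\<Sum>i<N. (k i)\<^sup>2) + s\<^sup>2"
proof -
  have R_diag: "(\<lambda>n. R n i i) \<longlonglongrightarrow> 1" if "i < N" for i
    using R[OF that that] by simp
  have R_offdiag: "(\<lambda>n. R n i j) \<longlonglongrightarrow> 0" if "i < N" "j < N" "i \<noteq> j" for i j
    using R[OF that(1,2)] that(3) by simp
  have "(\<lambda>n. (\<Sum>i<N. \<Sum>j<N. K n i * K n j * (cmod (R n i j))\<^sup>2)
        + 2 * s / sqrt n * Re (\<Sum>i<N. of_real (K n i) * R n i i) + s\<^sup>2)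
      \<longlonglongrightarrow> (\<Sum>i<N. \<Sum>j<N. k i * k j * (cmod (if i = j then 1 else 0 :: complex))\<^sup>2)
        + 0 * Re (\<Sum>i<N. of_real (k i) * 1) + s\<^sup>2"
  proof (intro tendsto_intros)
    show "(\<lambda>n. 2 * s / sqrt (real n)) \<longlonglongrightarrow> 0"
      by (intro tendsto_divide_0[OF tendsto_const] filterlim_at_top_imp_at_infinity
          filterlim_compose[OF sqrt_at_top filterlim_real_sequentially])
  qed (auto intro: R_diag R_offdiag K)
  moreover have "k i * k j * (cmod (if i = j then 1 else 0 :: complex))\<^sup>2 = (if j = i then (k i)\<^sup>2 else 0)"
    for i j
    by (simp add: power2_eq_square)
  ultimately show ?thesis by simp
qed

lemma tendsto_deflection_of_gram:
  fixes h :: "nat \<times> nat \<Rightarrow> complex" and a :: "nat \<Rightarrow> nat \<Rightarrow> complex" and g P :: "nat \<Rightarrow> real"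
  assumes pos: "st2 > 0" "sn2 > 0" "\<And>i. i < N \<Longrightarrow> sv2 i > 0"
    and power: "\<And>M i. M \<ge> 1 \<Longrightarrow> i < N \<Longrightarrow> (cmod (a M i))\<^sup>2 = P i / sqrt (real M)"
    and gram: "\<And>i j. i < N \<Longrightarrow> j < N \<Longrightarrow> (\<lambda>M. gram h M i j / of_nat M) \<longlonglongrightarrow> (if i = j then 1 else 0)"
  shows "(\<lambda>M. deflection N M st2 sv2 sn2 (\<lambda>m i. h (m, i) * of_real (g i)) (a M)) \<longlonglongrightarrow>
     (st2 * (\<Sum>i<N. (g i)\<^sup>2 * P i))\<^sup>2 / ((\<Sum>i<N. ((g i)\<^sup>2 * P i * sv2 i)\<^sup>2) + sn2\<^sup>2)"
proof -
  define u where "u M i = complex_of_real (sqrt (sqrt M) * g i) * a M i" for M i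
  define K where "K M i = (cmod (u M i))\<^sup>2 * sv2 i" for M i
  define R where "R M i j = gram h M i j / of_nat M" for M i j
  have u: "eventually (\<lambda>M. (cmod (u M i))\<^sup>2 = (g i)\<^sup>2 * P i) sequentially" if "i < N" for i
    using eventually_ge_at_top[of 1]
    by eventually_elim (use that in \<open>simp add: u_def norm_mult power_mult_distrib power\<close>)
  let ?num = "\<lambda>M. st2 * Re (\<Sum>i<N. \<Sum>j<N. u M i * cnj (u M j) * R M i j)"
  let ?den = "\<lambda>M. (\<Sum>i<N. \<Sum>j<N. K M i * K M j * (cmod (R M i j))\<^sup>2)
        + 2 * sn2 / sqrt M * Re (\<Sum>i<N. of_real (K M i) * R M i i) + sn2\<^sup>2"
  have defl: "eventually (\<lambda>M. (?num M)\<^sup>2 / ?den M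
      = deflection N M st2 sv2 sn2 (\<lambda>m i. h (m, i) * of_real (g i)) (a M)) sequentially"
    using eventually_ge_at_top[of 1]
  proof eventually_elim
    case (elim M)
    show ?case
      using deflection_eq_normalized_gram[where N = N and ?sv2.0 = sv2 and h = h and g = g
          and a = "a M", OF pos elim]
      by (simp only: u_def K_def R_def)
  qed
  have R: "(\<lambda>M. R M i j) \<longlonglongrightarrow> (if i = j then 1 else 0)" if "i < N" "j < N" for i j
    using gram[OF that] by (simp add: R_def)
  then have num: "?num \<longlonglongrightarrow> st2 * Re (of_real (\<Sum>i<N. (g i)\<^sup>2 * P i))"
    using u by (intro tendsto_intros tendsto_hermitian_form_identity)
  have den: "?den \<longlonglongrightarrow> (\<Sum>i<N. ((g i)\<^sup>2 * P i * sv2 i)\<^sup>2) + sn2\<^sup>2"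
  proof (rule tendsto_deflection_denominator[OF R])
    show "(\<lambda>M. K M i) \<longlonglongrightarrow> (g i)\<^sup>2 * P i * sv2 i" if "i < N" for i
    proof (rule Lim_transform_eventually[OF tendsto_const])
      show "eventually (\<lambda>M. (g i)\<^sup>2 * P i * sv2 i = K M i) sequentially"
        using u[OF that] by eventually_elim (simp add: K_def)
    qed
  qed
  have "0 \<le> (\<Sum>i<N. ((g i)\<^sup>2 * P i * sv2 i)\<^sup>2)" "0 < sn2\<^sup>2"
    using pos(2) by (simp_all add: sum_nonneg)
  then have "(\<Sum>i<N. ((g i)\<^sup>2 * P i * sv2 i)\<^sup>2) + sn2\<^sup>2 \<noteq> 0" by linarith
  from Lim_transform_eventually[OF tendsto_divide[OF tendsto_power[OF num] den this] defl]
  show ?thesis by simp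
qed

section \<open>Almost sure convergence of the channel Gram matrix\<close>

lemma prob_space_chan_space: "prob_space chan_space"
  unfolding chan_space_def by (rule prob_space_PiM) (rule prob_space_cgauss, simp)

lemma cgauss_moments4_chan_space:
  assumes fin: "finite K"
  shows "cgauss_moments4 chan_space K (\<lambda>k h. h k) (\<lambda>_. 1)"
proof -
  interpret product_prob_space "\<lambda>_::nat \<times> nat. cgauss 1" UNIV
    by (rule product_prob_spaceI) (rule prob_space_cgauss, simp)
  have m: "cgauss_moments4 (PiM K (\<lambda>_. cgauss 1)) K (\<lambda>k x. x k) (\<lambda>_. 1)"
    by (rule cgauss_moments4_PiM[OF fin]) simp
  have D: "distr chan_space (PiM K (\<lambda>_. cgauss 1)) (\<lambda>x. restrict x K) = PiM K (\<lambda>_. cgauss 1)"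
    unfolding chan_space_def by (rule distr_PiM_restrict_finite[OF fin]) simp
  have restrict: "(\<lambda>x. restrict x K) \<in> measurable chan_space (PiM K (\<lambda>_. cgauss 1))"
    unfolding chan_space_def by (rule measurable_restrict_subset) simp
  have meas: "(\<lambda>h. h k) \<in> borel_measurable chan_space" for k
  proof -
    have "(\<lambda>h. h k) \<in> measurable chan_space (cgauss 1)"
      unfolding chan_space_def by (rule measurable_component_singleton) simp
    then show ?thesis using measurable_cong_sets[OF refl sets_cgauss, of chan_space 1] by simp
  qed
  have "has_bochner_integral chan_space (cmonomial K (\<lambda>k h. h k) p q) (\<Prod>k\<in>K. cgauss_moment 1 (p k) (q k))"
    if pq: "(\<Sum>k\<in>K. p k + q k) \<le> 4" for p q
  proof -
    have h: "has_bochner_integral (PiM K (\<lambda>_. cgauss 1)) (cmonomial K (\<lambda>k x. x k) p q)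
        (\<Prod>k\<in>K. cgauss_moment 1 (p k) (q k))"
      using m pq unfolding cgauss_moments4_def by auto
    then have "cmonomial K (\<lambda>k x. x k) p q \<in> borel_measurable (PiM K (\<lambda>_. cgauss 1))"
      by (auto simp: has_bochner_integral_iff)
    moreover have "has_bochner_integral (distr chan_space (PiM K (\<lambda>_. cgauss 1)) (\<lambda>x. restrict x K))
        (cmonomial K (\<lambda>k x. x k) p q) (\<Prod>k\<in>K. cgauss_moment 1 (p k) (q k))"
      by (subst D) (rule h)
    ultimately have "has_bochner_integral chan_space (\<lambda>h. cmonomial K (\<lambda>k x. x k) p q (restrict h K))
        (\<Prod>k\<in>K. cgauss_moment 1 (p k) (q k))"
      unfolding has_bochner_integral_iff
      by (simp add: integrable_distr_eq[OF restrict] integral_distr[OF restrict])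
    moreover have "(\<lambda>h. cmonomial K (\<lambda>k x. x k) p q (restrict h K)) = cmonomial K (\<lambda>k h. h k) p q"
      unfolding cmonomial_def by (intro ext prod.cong) auto
    ultimately show ?thesis by simp
  qed
  then show ?thesis
    unfolding cgauss_moments4_def using fin prob_space_chan_space meas by blast
qed

definition sqnorm :: "nat \<Rightarrow> (nat \<Rightarrow> complex) \<Rightarrow> real" where
  "sqnorm N c = (\<Sum>i<N. (cmod (c i))\<^sup>2)"

definition row_energy :: "nat \<Rightarrow> (nat \<Rightarrow> complex) \<Rightarrow> nat \<Rightarrow> (nat \<times> nat \<Rightarrow> complex) \<Rightarrow> real" where
  "row_energy N c M h = (\<Sum>m<M. (cmod (\<Sum>i<N. c i * h (m, i)))\<^sup>2)"

definition row_coeff :: "(nat \<Rightarrow> complex) \<Rightarrow> nat \<Rightarrow> nat \<times> nat \<Rightarrow> complex" where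
  "row_coeff c m k = (if fst k = m then c (snd k) else 0)"

lemma sum_row_coeff:
  assumes "finite I" "m \<in> I"
  shows "(\<Sum>k\<in>I \<times> {..<N}. row_coeff c m k * h k) = (\<Sum>i<N. c i * h (m, i))"
proof -
  have "(\<Sum>k\<in>I \<times> {..<N}. row_coeff c m k * h k) = (\<Sum>m'\<in>I. \<Sum>i<N. row_coeff c m (m', i) * h (m', i))"
    by (simp add: sum.cartesian_product)
  also have "\<dots> = (\<Sum>m'\<in>I. if m' = m then (\<Sum>i<N. c i * h (m, i)) else 0)"
    by (intro sum.cong refl) (simp add: row_coeff_def)
  finally show ?thesis using assms by simp
qed

lemma sum_row_coeff_cov:
  assumes "finite I" "m \<in> I" "m' \<in> I"
  shows "(\<Sum>k\<in>I \<times> {..<N}. row_coeff c m k * cnj (row_coeff c m' k) * of_real 1)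
    = (if m = m' then of_real (sqnorm N c) else 0)"
proof -
  have "(\<Sum>k\<in>I \<times> {..<N}. row_coeff c m k * cnj (row_coeff c m' k) * of_real 1)
      = (\<Sum>m''\<in>I. \<Sum>i<N. row_coeff c m (m'', i) * cnj (row_coeff c m' (m'', i)))"
    by (simp add: sum.cartesian_product)
  also have "\<dots> = (\<Sum>m''\<in>I. if m'' = m then (if m = m' then (\<Sum>i<N. c i * cnj (c i)) else 0) else 0)"
    by (intro sum.cong refl) (auto simp: row_coeff_def)
  finally show ?thesis
    using assms by (simp add: sqnorm_def of_real_sum flip: complex_norm_square)
qed

lemma has_bochner_integral_row_sq:
  "has_bochner_integral chan_space (\<lambda>h. (cmod (\<Sum>i<N. c i * h (m, i)))\<^sup>2) (sqnorm N c)"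
proof -
  have I: "finite {m}" "m \<in> {m}" by auto
  have "has_bochner_integral chan_space (\<lambda>h. (\<Sum>i<N. c i * h (m, i)) * cnj (\<Sum>i<N. c i * h (m, i)))
      (of_real (sqnorm N c))"
    using cgauss_moments4_hermitian_form[OF cgauss_moments4_chan_space, of "{m} \<times> {..<N}"
        "row_coeff c m" "row_coeff c m"]
    unfolding sum_row_coeff[OF I] sum_row_coeff_cov[OF I I(2)] by simp
  from has_bochner_integral_Re[OF this] show ?thesis
    by (simp only: complex_norm_square[symmetric] Re_complex_of_real)
qed

lemma has_bochner_integral_row_sq_product:
  "has_bochner_integral chan_space
     (\<lambda>h. (cmod (\<Sum>i<N. c i * h (m, i)))\<^sup>2 * (cmod (\<Sum>i<N. c i * h (m', i)))\<^sup>2)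
     ((sqnorm N c)\<^sup>2 + (if m = m' then (sqnorm N c)\<^sup>2 else 0))"
proof -
  have I: "finite {m, m'}" "m \<in> {m, m'}" "m' \<in> {m, m'}" by auto
  have H: "has_bochner_integral chan_space
      (\<lambda>h. (\<Sum>i<N. c i * h (m, i)) * cnj (\<Sum>i<N. c i * h (m, i)) *
        ((\<Sum>i<N. c i * h (m', i)) * cnj (\<Sum>i<N. c i * h (m', i))))
      ((if m = m then of_real (sqnorm N c) else 0) * (if m' = m' then of_real (sqnorm N c) else 0) +
       (if m = m' then of_real (sqnorm N c) else 0) * (if m' = m then of_real (sqnorm N c) else 0))"
    using cgauss_moments4_hermitian_form_product[OF cgauss_moments4_chan_space, of "{m, m'} \<times> {..<N}"
        "row_coeff c m" "row_coeff c m" "row_coeff c m'" "row_coeff c m'"]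
    unfolding sum_row_coeff[OF I(1,2)] sum_row_coeff[OF I(1,3)] sum_row_coeff_cov[OF I(1,2,2)]
      sum_row_coeff_cov[OF I(1,3,3)] sum_row_coeff_cov[OF I(1,2,3)] sum_row_coeff_cov[OF I(1,3,2)]
    by simp
  have "(if m = m then of_real (sqnorm N c) else 0) * (if m' = m' then of_real (sqnorm N c) else 0) +
       (if m = m' then of_real (sqnorm N c) else 0) * (if m' = m then of_real (sqnorm N c) else 0)
      = complex_of_real ((sqnorm N c)\<^sup>2 + (if m = m' then (sqnorm N c)\<^sup>2 else 0))"
    by (simp add: power2_eq_square)
  from has_bochner_integral_Re[OF H[unfolded this]] show ?thesis
    by (simp only: complex_norm_square[symmetric] of_real_mult[symmetric] Re_complex_of_real)
qed

lemma has_bochner_integral_row_energy: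
  "has_bochner_integral chan_space (row_energy N c M) (real M * sqnorm N c)"
proof -
  have "has_bochner_integral chan_space (\<lambda>h. \<Sum>m<M. (cmod (\<Sum>i<N. c i * h (m, i)))\<^sup>2) (\<Sum>m<M. sqnorm N c)"
    by (intro has_bochner_integral_sum has_bochner_integral_row_sq)
  then show ?thesis unfolding row_energy_def by simp
qed

lemma has_bochner_integral_row_energy_sq:
  "has_bochner_integral chan_space (\<lambda>h. (row_energy N c M h)\<^sup>2)
     ((real M)\<^sup>2 * (sqnorm N c)\<^sup>2 + real M * (sqnorm N c)\<^sup>2)"
proof -
  have "has_bochner_integral chan_space
      (\<lambda>h. \<Sum>m<M. \<Sum>m'<M. (cmod (\<Sum>i<N. c i * h (m, i)))\<^sup>2 * (cmod (\<Sum>i<N. c i * h (m', i)))\<^sup>2)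
      (\<Sum>m<M. \<Sum>m'<M. (sqnorm N c)\<^sup>2 + (if m = m' then (sqnorm N c)\<^sup>2 else 0))"
    by (intro has_bochner_integral_sum has_bochner_integral_row_sq_product)
  then show ?thesis
    unfolding row_energy_def
    by (simp add: power2_eq_square[of "sum _ _"] sum_product sum.distrib power2_eq_square algebra_simps)
qed

text \<open>A strong law from Chebyshev's inequality and the first Borel--Cantelli lemma.\<close>
lemma (in prob_space) AE_tendsto_of_summable_variance:
  fixes X :: "nat \<Rightarrow> 'a \<Rightarrow> real"
  assumes X: "\<And>n. random_variable borel (X n)" "\<And>n. integrable M (\<lambda>x. (X n x)\<^sup>2)"
    and summable: "summable (\<lambda>n. variance (X n))"
  shows "AE x in M. (\<lambda>n. X n x - expectation (X n)) \<longlonglongrightarrow> 0"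
proof -
  have "AE x in M. eventually (\<lambda>n. \<bar>X n x - expectation (X n)\<bar> < e) sequentially" if e: "e > 0" for e
  proof -
    define A where "A n = {x \<in> space M. e \<le> \<bar>X n x - expectation (X n)\<bar>}" for n
    have [measurable]: "X n \<in> borel_measurable M" for n using X(1) .
    have A: "A n \<in> events" for n unfolding A_def by measurable
    have "prob (A n) \<le> variance (X n) / e\<^sup>2" for n
      unfolding A_def using X e by (intro Chebyshev_inequality) auto
    then have "summable (\<lambda>n. prob (A n))"
      by (intro summable_comparison_test'[OF summable_divide[OF summable]]) auto
    then have "AE x in M. eventually (\<lambda>n. x \<in> space M - A n) sequentially"
      by (intro borel_cantelli_AE1 A) (auto simp: emeasure_eq_measure)
    then show ?thesis
      by (rule AE_mp) (auto simp: A_def intro!: AE_I2 elim!: eventually_mono)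
  qed
  then have "AE x in M. \<forall>l::nat.
      eventually (\<lambda>n. \<bar>X n x - expectation (X n)\<bar> < inverse (real (Suc l))) sequentially"
    by (simp add: AE_all_countable)
  then show ?thesis
  proof (rule AE_mp, intro AE_I2 impI tendstoI)
    fix x and e :: real
    assume H: "\<forall>l::nat. eventually (\<lambda>n. \<bar>X n x - expectation (X n)\<bar> < inverse (real (Suc l))) sequentially"
      and "e > 0"
    then obtain l where "inverse (real (Suc l)) < e" using reals_Archimedean by blast
    note l = this
    show "eventually (\<lambda>n. dist (X n x - expectation (X n)) 0 < e) sequentially"
      using H[rule_format, of l] by eventually_elim (use l in simp)
  qed
qed

lemma AE_row_energy_squares:
  "AE h in chan_space. (\<lambda>n. row_energy N c (n\<^sup>2) h / real (n\<^sup>2)) \<longlonglongrightarrow> sqnorm N c"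
proof -
  interpret prob_space chan_space by (rule prob_space_chan_space)
  define X where "X n h = row_energy N c (n\<^sup>2) h / real (n\<^sup>2)" for n h
  have E: "has_bochner_integral chan_space (X n) (real (n\<^sup>2) * sqnorm N c / real (n\<^sup>2))" for n
    unfolding X_def by (intro has_bochner_integral_divide_zero has_bochner_integral_row_energy)
  have E2: "has_bochner_integral chan_space (\<lambda>h. (X n h)\<^sup>2)
      (((real (n\<^sup>2))\<^sup>2 * (sqnorm N c)\<^sup>2 + real (n\<^sup>2) * (sqnorm N c)\<^sup>2) / (real (n\<^sup>2))\<^sup>2)" for n
    unfolding X_def power_divide
    by (intro has_bochner_integral_divide_zero has_bochner_integral_row_energy_sq)
  have mean: "expectation (X n) = sqnorm N c" if "n \<ge> 1" for n
    using E[of n] that by (simp add: has_bochner_integral_iff)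
  have "variance (X n) = (sqnorm N c)\<^sup>2 * inverse (real n ^ 2)" if "n \<ge> 1" for n
  proof -
    have "variance (X n) = expectation (\<lambda>h. (X n h)\<^sup>2) - (expectation (X n))\<^sup>2"
      using E E2 by (intro variance_eq) (auto simp: has_bochner_integral_iff)
    also have "\<dots> = ((real (n\<^sup>2))\<^sup>2 * (sqnorm N c)\<^sup>2 + real (n\<^sup>2) * (sqnorm N c)\<^sup>2) / (real (n\<^sup>2))\<^sup>2
        - (real (n\<^sup>2) * sqnorm N c / real (n\<^sup>2))\<^sup>2"
      unfolding has_bochner_integral_integral_eq[OF E[of n]] has_bochner_integral_integral_eq[OF E2[of n]] ..
    also have "\<dots> = (sqnorm N c)\<^sup>2 * inverse (real n ^ 2)"
      using that by (simp add: field_simps power2_eq_square)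
    finally show ?thesis .
  qed
  then have "summable (\<lambda>n. variance (X n))"
    by (intro summable_comparison_test'[OF summable_mult[OF inverse_power_summable], of _ 1])
       (auto simp: variance_positive)
  then have "AE h in chan_space. (\<lambda>n. X n h - expectation (X n)) \<longlonglongrightarrow> 0"
    using E E2 by (intro AE_tendsto_of_summable_variance) (auto simp: has_bochner_integral_iff)
  then show ?thesis
  proof (rule AE_mp, intro AE_I2 impI)
    fix h assume "(\<lambda>n. X n h - expectation (X n)) \<longlonglongrightarrow> 0"
    then have "(\<lambda>n. X n h - expectation (X n) + sqnorm N c) \<longlonglongrightarrow> 0 + sqnorm N c"
      by (intro tendsto_add tendsto_const)
    moreover have "eventually (\<lambda>n. X n h - expectation (X n) + sqnorm N c = X n h) sequentially"
      using eventually_ge_at_top[of 1] by eventually_elim (simp add: mean)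
    ultimately show "(\<lambda>n. row_energy N c (n\<^sup>2) h / real (n\<^sup>2)) \<longlonglongrightarrow> sqnorm N c"
      unfolding X_def[symmetric] by (auto intro: Lim_transform_eventually)
  qed
qed

lemma filterlim_floor_sqrt_sequentially: "filterlim floor_sqrt at_top sequentially"
  unfolding filterlim_at_top
  by (auto intro: eventually_mono[OF eventually_ge_at_top] le_floor_sqrtI)

text \<open>Between consecutive squares \<open>k\<^sup>2 \<le> n < (k + 1)\<^sup>2\<close> monotonicity traps \<open>S n / n\<close> between
  \<open>S (k\<^sup>2) / (k + 1)\<^sup>2\<close> and \<open>S ((k + 1)\<^sup>2) / k\<^sup>2\<close>, and both tend to the limit along the squares.\<close>
lemma tendsto_div_of_incseq_squares:
  fixes S :: "nat \<Rightarrow> real"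
  assumes inc: "incseq S" and nonneg: "\<And>n. S n \<ge> 0"
    and lim: "(\<lambda>k. S (k\<^sup>2) / real (k\<^sup>2)) \<longlonglongrightarrow> \<sigma>"
  shows "(\<lambda>n. S n / real n) \<longlonglongrightarrow> \<sigma>"
proof -
  define lo where "lo k = S (k\<^sup>2) / real ((Suc k)\<^sup>2)" for k
  define hi where "hi k = S ((Suc k)\<^sup>2) / real (k\<^sup>2)" for k
  have "(\<lambda>k. S (k\<^sup>2) / real (k\<^sup>2) * (real (k\<^sup>2) / real ((Suc k)\<^sup>2))) \<longlonglongrightarrow> \<sigma> * 1"
    by (intro tendsto_mult lim) real_asymp
  moreover have "eventually (\<lambda>k. S (k\<^sup>2) / real (k\<^sup>2) * (real (k\<^sup>2) / real ((Suc k)\<^sup>2)) = lo k) sequentially"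
    using eventually_ge_at_top[of 1] by eventually_elim (simp add: lo_def)
  ultimately have lo: "lo \<longlonglongrightarrow> \<sigma>" by (auto intro: Lim_transform_eventually)
  have "(\<lambda>k. S ((Suc k)\<^sup>2) / real ((Suc k)\<^sup>2) * (real ((Suc k)\<^sup>2) / real (k\<^sup>2))) \<longlonglongrightarrow> \<sigma> * 1"
    by (intro tendsto_mult LIMSEQ_Suc[OF lim]) real_asymp
  moreover have "eventually (\<lambda>k. S ((Suc k)\<^sup>2) / real ((Suc k)\<^sup>2) * (real ((Suc k)\<^sup>2) / real (k\<^sup>2)) = hi k)
      sequentially"
    using eventually_ge_at_top[of 1] by eventually_elim (simp add: hi_def)
  ultimately have hi: "hi \<longlonglongrightarrow> \<sigma>" by (auto intro: Lim_transform_eventually)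
  have bracket: "lo (floor_sqrt n) \<le> S n / real n \<and> S n / real n \<le> hi (floor_sqrt n)" if "n \<ge> 1" for n
  proof -
    let ?k = "floor_sqrt n"
    have k: "real (?k\<^sup>2) \<le> real n" "real n \<le> real ((Suc ?k)\<^sup>2)" "real (?k\<^sup>2) > 0"
      using floor_sqrt_power2_le[of n] Suc_floor_sqrt_power2_gt[of n] that
      by (simp_all only: of_nat_le_iff of_nat_0_less_iff) auto
    have "lo ?k \<le> S (?k\<^sup>2) / real n"
      unfolding lo_def using k nonneg by (intro divide_left_mono) auto
    also have "\<dots> \<le> S n / real n"
      using k incseqD[OF inc floor_sqrt_power2_le[of n]] by (intro divide_right_mono) auto
    finally have lower: "lo ?k \<le> S n / real n" .
    have "S n / real n \<le> S ((Suc ?k)\<^sup>2) / real n"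
      using k incseqD[OF inc less_imp_le[OF Suc_floor_sqrt_power2_gt[of n]]] by (intro divide_right_mono) auto
    also have "\<dots> \<le> hi ?k"
      unfolding hi_def using k nonneg by (intro divide_left_mono) auto
    finally show ?thesis using lower by simp
  qed
  show ?thesis
  proof (rule tendsto_sandwich[OF _ _ filterlim_compose[OF lo filterlim_floor_sqrt_sequentially]
        filterlim_compose[OF hi filterlim_floor_sqrt_sequentially]])
    show "eventually (\<lambda>n. lo (floor_sqrt n) \<le> S n / real n) sequentially"
      using eventually_ge_at_top[of 1] by eventually_elim (use bracket in blast)
    show "eventually (\<lambda>n. S n / real n \<le> hi (floor_sqrt n)) sequentially"
      using eventually_ge_at_top[of 1] by eventually_elim (use bracket in blast)
  qed
qed

lemma AE_row_energy:
  "AE h in chan_space. (\<lambda>M. row_energy N c M h / real M) \<longlonglongrightarrow> sqnorm N c"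
  using AE_row_energy_squares
proof (rule AE_mp, intro AE_I2 impI tendsto_div_of_incseq_squares)
  show "incseq (\<lambda>M. row_energy N c M h)" for h
    by (rule incseq_SucI) (simp add: row_energy_def)
qed (simp_all add: row_energy_def sum_nonneg)

lemma mult_cnj_polarization:
  fixes a b :: complex
  shows "a * cnj b = (of_real ((cmod (a + b))\<^sup>2) - of_real ((cmod (a + (-1) * b))\<^sup>2)
     + \<i> * (of_real ((cmod (a + \<i> * b))\<^sup>2) - of_real ((cmod (a + (- \<i>) * b))\<^sup>2))) / 4"
  by (simp only: cmod_power2) (simp add: complex_eq_iff power2_eq_square algebra_simps)

definition pair_coeff :: "nat \<Rightarrow> nat \<Rightarrow> complex \<Rightarrow> nat \<Rightarrow> complex" where
  "pair_coeff i j t l = (if l = i then 1 else 0) + t * (if l = j then 1 else 0)"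

lemma sum_pair_coeff:
  assumes "i < N" "j < N"
  shows "(\<Sum>l<N. pair_coeff i j t l * h (m, l)) = h (m, i) + t * h (m, j)"
proof -
  have "pair_coeff i j t l * h (m, l) = (if l = i then h (m, i) else 0) + (if l = j then t * h (m, j) else 0)" for l
    by (simp add: pair_coeff_def distrib_right)
  then show ?thesis using assms by (simp add: sum.distrib)
qed

lemma sqnorm_pair_coeff:
  assumes "i < N" "j < N"
  shows "sqnorm N (pair_coeff i j t) = (if i = j then (cmod (1 + t))\<^sup>2 else 1 + (cmod t)\<^sup>2)"
proof (cases "i = j")
  case True
  then have "sqnorm N (pair_coeff i j t) = (\<Sum>l<N. if l = i then (cmod (1 + t))\<^sup>2 else 0)"
    unfolding sqnorm_def pair_coeff_def by (intro sum.cong) auto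
  then show ?thesis using True assms by simp
next
  case False
  then have "sqnorm N (pair_coeff i j t) = (\<Sum>l<N. (if l = i then 1 else 0) + (if l = j then (cmod t)\<^sup>2 else 0))"
    unfolding sqnorm_def pair_coeff_def by (intro sum.cong) auto
  then show ?thesis using False assms by (simp add: sum.distrib)
qed

text \<open>The strong law for the row energies of the four combinations \<open>e\<^sub>i + t e\<^sub>j\<close>, \<open>t\<^sup>4 = 1\<close>,
  gives the normalized Gram matrix by polarization.\<close>
lemma AE_gram_tendsto_identity:
  "AE h in chan_space. \<forall>i<N. \<forall>j<N. (\<lambda>M. gram h M i j / of_nat M) \<longlonglongrightarrow> (if i = j then 1 else 0)"
proof -
  let ?T = "{..<N} \<times> {..<N} \<times> {1, -1, \<i>, - \<i>}"
  have "AE h in chan_space. \<forall>(i, j, t)\<in>?T.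
      (\<lambda>M. row_energy N (pair_coeff i j t) M h / real M) \<longlonglongrightarrow> sqnorm N (pair_coeff i j t)"
    by (intro AE_finite_allI) (auto intro: AE_row_energy)
  then show ?thesis
  proof (rule AE_mp, intro AE_I2 impI allI)
    fix h i j
    assume H: "\<forall>(i, j, t)\<in>?T.
      (\<lambda>M. row_energy N (pair_coeff i j t) M h / real M) \<longlonglongrightarrow> sqnorm N (pair_coeff i j t)"
      and ij: "i < N" "j < N"
    let ?E = "\<lambda>t M. complex_of_real (row_energy N (pair_coeff i j t) M h / real M)"
    have "gram h M i j / of_nat M = (?E 1 M - ?E (-1) M + \<i> * (?E \<i> M - ?E (-\<i>) M)) / 4" for M
      unfolding row_energy_def sum_pair_coeff[OF ij] gram_def mult_cnj_polarization[of "h (_, i)" "h (_, j)"]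
      by (simp add: sum_divide_distrib[symmetric] sum_subtractf sum.distrib sum_distrib_left
          diff_divide_distrib add_divide_distrib of_real_sum[symmetric] algebra_simps)
    moreover have "(\<lambda>M. (?E 1 M - ?E (-1) M + \<i> * (?E \<i> M - ?E (-\<i>) M)) / 4) \<longlonglongrightarrow>
        (of_real (sqnorm N (pair_coeff i j 1)) - of_real (sqnorm N (pair_coeff i j (-1)))
         + \<i> * (of_real (sqnorm N (pair_coeff i j \<i>)) - of_real (sqnorm N (pair_coeff i j (-\<i>))))) / 4"
      using H ij by (intro tendsto_intros) auto
    moreover have "(of_real (sqnorm N (pair_coeff i j 1)) - of_real (sqnorm N (pair_coeff i j (-1)))
         + \<i> * (of_real (sqnorm N (pair_coeff i j \<i>)) - of_real (sqnorm N (pair_coeff i j (-\<i>))))) / 4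
        = (if i = j then 1 else 0 :: complex)"
      unfolding sqnorm_pair_coeff[OF ij] by (simp add: cmod_power2 complex_eq_iff)
    ultimately show "(\<lambda>M. gram h M i j / of_nat M) \<longlonglongrightarrow> (if i = j then 1 else 0)"
      by (simp only:)
  qed
qed

theorem theorem3:
  fixes N :: nat and st2 sn2 \<alpha> :: real and sv2 d P :: "nat \<Rightarrow> real"
    and a :: "nat \<Rightarrow> nat \<Rightarrow> complex"
  assumes "st2 > 0" and "sn2 > 0" and "\<alpha> > 0"
    and "\<And>i. i < N \<Longrightarrow> sv2 i > 0"
    and "\<And>i. i < N \<Longrightarrow> d i > 0"
    and "\<And>i. i < N \<Longrightarrow> P i \<ge> 0"
    and "\<And>M i. M \<ge> 1 \<Longrightarrow> i < N \<Longrightarrow> (cmod (a M i))\<^sup>2 = P i / sqrt (real M)"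
  shows "AE h in chan_space.
     (\<lambda>M. deflection N M st2 sv2 sn2
            (\<lambda>m i. h (m, i) / complex_of_real (sqrt (d i powr \<alpha>))) (a M))
     \<longlonglongrightarrow> st2\<^sup>2 * (\<Sum>i<N. P i / d i powr \<alpha>)\<^sup>2
          / ((\<Sum>i<N. (sv2 i)\<^sup>2 * (P i)\<^sup>2 / d i powr (2 * \<alpha>)) + sn2\<^sup>2)"
  using AE_gram_tendsto_identity[of N]
proof (rule AE_mp, intro AE_I2 impI)
  fix h :: "nat \<times> nat \<Rightarrow> complex"
  assume gram: "\<forall>i<N. \<forall>j<N. (\<lambda>M. gram h M i j / of_nat M) \<longlonglongrightarrow> (if i = j then 1 else 0)"
  define g where "g i = 1 / sqrt (d i powr \<alpha>)" for i
  have g: "(g i)\<^sup>2 = 1 / d i powr \<alpha>" for i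
    by (simp add: g_def power_divide)
  have "d i powr (2 * \<alpha>) = (d i powr \<alpha>)\<^sup>2" for i
    by (simp only: mult_2 powr_add power2_eq_square)
  then have "((g i)\<^sup>2 * P i * sv2 i)\<^sup>2 = (sv2 i)\<^sup>2 * (P i)\<^sup>2 / d i powr (2 * \<alpha>)" for i
    by (simp only: g power_mult_distrib power_divide power_one) (simp add: field_split_simps)
  moreover have "(g i)\<^sup>2 * P i = P i / d i powr \<alpha>" for i
    by (simp add: g)
  moreover have "(\<lambda>m i. h (m, i) / complex_of_real (sqrt (d i powr \<alpha>))) = (\<lambda>m i. h (m, i) * of_real (g i))"
    by (simp add: g_def fun_eq_iff divide_inverse)
  moreover have "(\<lambda>M. deflection N M st2 sv2 sn2 (\<lambda>m i. h (m, i) * of_real (g i)) (a M)) \<longlonglongrightarrow>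
      (st2 * (\<Sum>i<N. (g i)\<^sup>2 * P i))\<^sup>2 / ((\<Sum>i<N. ((g i)\<^sup>2 * P i * sv2 i)\<^sup>2) + sn2\<^sup>2)"
    by (rule tendsto_deflection_of_gram) (use assms gram in auto)
  ultimately show "(\<lambda>M. deflection N M st2 sv2 sn2 (\<lambda>m i. h (m, i) / complex_of_real (sqrt (d i powr \<alpha>))) (a M))
     \<longlonglongrightarrow> st2\<^sup>2 * (\<Sum>i<N. P i / d i powr \<alpha>)\<^sup>2 / ((\<Sum>i<N. (sv2 i)\<^sup>2 * (P i)\<^sup>2 / d i powr (2 * \<alpha>)) + sn2\<^sup>2)"
    by (simp only: power_mult_distrib)
qed

end
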